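(* Let $G$ be a graph with $n$ vertices and $m\ge1$ edges, and put $X=2m+M_1-\frac{4m^2}{n}$. (i) If $n\le\frac{8m^2}{2m+M_1}$, then $$QE(G)\ \le\ \frac{2m}{n}+\sqrt{(n-1)\Big[X-\Big(\frac{2m}{n}\Big)^2\Big]},$$ with equality if and only if $G\cong K_n$, $G\cong\frac n2K_2$, or $G\cong S(n,r)$ for some $r$. (ii) If $n>\frac{8m^2}{2m+M_1}$, then $$QE(G)\ <\ \sqrt{\frac{X}{n}}+\sqrt{(n-1)\Big(X-\frac{X}{n}\Big)}.$$
   Context: All graphs are finite, simple and undirected. For a graph $G$ with $n$ vertices and $m$ edges, let $q_1\ge\cdots\ge q_n\ge0$ be the eigenvalues of the signless Laplacian $Q(G)=D(G)+A(G)$ ($D(G)$ the diagonal degree matrix, $A(G)$ the adjacency matrix). The signless Laplacian energy is $QE(G)=\sum_{i=1}^n|q_i-\frac{2m}{n}|$. $M_1=\sum_v d(v)^2$ is the first Zagreb index. $\frac n2K_2$ is the disjoint union of $\frac n2$ copies of $K_2$. A strongly regular graph with parameters $(n,r,a,c)$ is an $r$-regular graph on $n$ vertices in which any two adjacent vertices have exactly $a$ common neighbours and any two non-adjacent vertices have exactly $c$ common neighbours; $S(n,r)$ denotes a strongly regular graph with parameters $\big(n,r,\frac{r(r-1)}{n-1},\frac{r(r-1)}{n-1}\big)$. *)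

theory Defs
  imports "Jordan_Normal_Form.Char_Poly" "HOL-Computational_Algebra.Polynomial"
begin

definition simple_graph :: "nat \<Rightarrow> (nat \<Rightarrow> nat \<Rightarrow> bool) \<Rightarrow> bool" where
  "simple_graph n E \<longleftrightarrow> (\<forall>i j. E i j \<longrightarrow> i < n \<and> j < n \<and> i \<noteq> j \<and> E j i)"

definition edges :: "nat \<Rightarrow> (nat \<Rightarrow> nat \<Rightarrow> bool) \<Rightarrow> nat set set" where
  "edges n E = {{i, j} | i j. i < n \<and> j < n \<and> E i j}"

definition num_edges :: "nat \<Rightarrow> (nat \<Rightarrow> nat \<Rightarrow> bool) \<Rightarrow> nat" where
  "num_edges n E = card (edges n E)"

definition degree :: "nat \<Rightarrow> (nat \<Rightarrow> nat \<Rightarrow> bool) \<Rightarrow> nat \<Rightarrow> nat" where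
  "degree n E v = card {u. u < n \<and> E v u}"

definition zagreb1 :: "nat \<Rightarrow> (nat \<Rightarrow> nat \<Rightarrow> bool) \<Rightarrow> nat" where
  "zagreb1 n E = (\<Sum>v<n. (degree n E v)^2)"

definition signless_laplacian :: "nat \<Rightarrow> (nat \<Rightarrow> nat \<Rightarrow> bool) \<Rightarrow> real mat" where
  "signless_laplacian n E = mat n n (\<lambda>(i, j).
      (if i = j then real (degree n E i) else 0) + (if E i j then 1 else 0))"

text \<open>Eigenvalues with multiplicity: the real roots of the characteristic polynomial
  (for the real symmetric matrix Q these are all n eigenvalues).\<close>
definition Q_eigenvalues :: "nat \<Rightarrow> (nat \<Rightarrow> nat \<Rightarrow> bool) \<Rightarrow> real multiset" where
  "Q_eigenvalues n E = proots (char_poly (signless_laplacian n E))"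

definition QE :: "nat \<Rightarrow> (nat \<Rightarrow> nat \<Rightarrow> bool) \<Rightarrow> real" where
  "QE n E = (\<Sum>q\<in>#Q_eigenvalues n E. \<bar>q - 2 * real (num_edges n E) / real n\<bar>)"

definition graph_iso :: "nat \<Rightarrow> (nat \<Rightarrow> nat \<Rightarrow> bool) \<Rightarrow> (nat \<Rightarrow> nat \<Rightarrow> bool) \<Rightarrow> bool" where
  "graph_iso n E E' \<longleftrightarrow> (\<exists>f. bij_betw f {..<n} {..<n} \<and>
      (\<forall>i<n. \<forall>j<n. E i j \<longleftrightarrow> E' (f i) (f j)))"

definition complete_graph :: "nat \<Rightarrow> nat \<Rightarrow> nat \<Rightarrow> bool" where
  "complete_graph n i j \<longleftrightarrow> i < n \<and> j < n \<and> i \<noteq> j"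

text \<open>(n/2) K_2: vertices 2k and 2k+1 joined, for 2k+1 < n (meaningful for n even).\<close>
definition matching_graph :: "nat \<Rightarrow> nat \<Rightarrow> nat \<Rightarrow> bool" where
  "matching_graph n i j \<longleftrightarrow> i < n \<and> j < n \<and> i \<noteq> j \<and> i div 2 = j div 2"

definition common_neighbours :: "nat \<Rightarrow> (nat \<Rightarrow> nat \<Rightarrow> bool) \<Rightarrow> nat \<Rightarrow> nat \<Rightarrow> nat" where
  "common_neighbours n E u v = card {w. w < n \<and> E u w \<and> E v w}"

definition strongly_regular :: "nat \<Rightarrow> (nat \<Rightarrow> nat \<Rightarrow> bool) \<Rightarrow> nat \<Rightarrow> real \<Rightarrow> real \<Rightarrow> bool" where
  "strongly_regular n E r a c \<longleftrightarrow>
     (\<forall>v<n. degree n E v = r) \<and>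
     (\<forall>u<n. \<forall>v<n. u \<noteq> v \<longrightarrow> E u v \<longrightarrow> real (common_neighbours n E u v) = a) \<and>
     (\<forall>u<n. \<forall>v<n. u \<noteq> v \<longrightarrow> \<not> E u v \<longrightarrow> real (common_neighbours n E u v) = c)"

definition is_S :: "nat \<Rightarrow> (nat \<Rightarrow> nat \<Rightarrow> bool) \<Rightarrow> nat \<Rightarrow> bool" where
  "is_S n E r \<longleftrightarrow> strongly_regular n E r
      (real r * (real r - 1) / (real n - 1)) (real r * (real r - 1) / (real n - 1))"

end

theory Submission
  imports Defs
begin

text \<open>
  Let \<mu> 1, ..., \<mu> n be the signless Laplacian eigenvalues, d = 2m/n and y i = \<mu> i - d,
  so that QE = \<Sum> |y i|. The traces of Q and Q^2 give \<Sum> y i = 0 and \<Sum> (y i)^2 = X,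
  and testing Q on the all-ones vector shows that the largest eigenvalue is at least 4m/n,
  i.e. y 1 \<ge> d.
  (i) Cauchy-Schwarz on the other n - 1 deviations gives QE \<le> y 1 + sqrt ((n - 1)(X - (y 1)^2)),
  and n \<le> 8m^2/(2m + M1) means X \<le> n d^2, which makes the right-hand side decreasing for
  y 1 \<ge> d. Equality forces \<mu> 1 = 4m/n, hence G is regular (the all-ones vector is an
  eigenvector), and |y i| constant for i > 1; computing A^2 in the eigenbasis then shows that G
  is an S(n, r), whose spectrum conversely attains the bound. K_n and (n/2) K_2 are S(n, n - 1)
  and S(n, 1).
  (ii) Cauchy-Schwarz on all n deviations gives QE \<le> sqrt (n X), with equality only if all
  |y i| coincide; if X > n d^2 they would all exceed d, hence (as \<mu> i \<ge> 0) all be positive,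
  contradicting \<Sum> y i = 0.
\<close>

section \<open>Real symmetric matrices\<close>

text \<open>A real square matrix of order n is a function on pairs of naturals vanishing outside
  {..<n} \<times> {..<n}. The spectral theorem is proved for this encoding by Householder deflation;
  Jordan_Normal_Form matrices are used only to compute characteristic polynomials.\<close>

type_synonym fmat = "nat \<Rightarrow> nat \<Rightarrow> real"

definition fmat_on :: "nat \<Rightarrow> fmat \<Rightarrow> bool" where
  "fmat_on n A \<longleftrightarrow> (\<forall>i j. \<not> (i < n \<and> j < n) \<longrightarrow> A i j = 0)"

definition fmat_mult :: "nat \<Rightarrow> fmat \<Rightarrow> fmat \<Rightarrow> fmat" where
  "fmat_mult n A B = (\<lambda>i j. if i < n \<and> j < n then (\<Sum>k<n. A i k * B k j) else 0)"

definition fmat_one :: "nat \<Rightarrow> fmat" where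
  "fmat_one n = (\<lambda>i j. if i < n \<and> j < n \<and> i = j then 1 else 0)"

definition fmat_transpose :: "fmat \<Rightarrow> fmat" where
  "fmat_transpose A = (\<lambda>i j. A j i)"

definition fmat_diag :: "nat \<Rightarrow> (nat \<Rightarrow> real) \<Rightarrow> fmat" where
  "fmat_diag n d = (\<lambda>i j. if i < n \<and> j < n \<and> i = j then d i else 0)"

definition fmat_trace :: "nat \<Rightarrow> fmat \<Rightarrow> real" where
  "fmat_trace n A = (\<Sum>j<n. A j j)"

definition orthogonal_fmat :: "nat \<Rightarrow> fmat \<Rightarrow> bool" where
  "orthogonal_fmat n U \<longleftrightarrow> fmat_on n U \<and>
     fmat_mult n (fmat_transpose U) U = fmat_one n \<and> fmat_mult n U (fmat_transpose U) = fmat_one n"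

definition fmat_conj_diag :: "nat \<Rightarrow> fmat \<Rightarrow> (nat \<Rightarrow> real) \<Rightarrow> fmat" where
  "fmat_conj_diag n U \<mu> = fmat_mult n (fmat_mult n U (fmat_diag n \<mu>)) (fmat_transpose U)"

lemma fmat_on_mult [simp]: "fmat_on n (fmat_mult n A B)"
  unfolding fmat_on_def fmat_mult_def by auto

lemma fmat_on_one [simp]: "fmat_on n (fmat_one n)"
  unfolding fmat_on_def fmat_one_def by auto

lemma fmat_on_diag [simp]: "fmat_on n (fmat_diag n d)"
  unfolding fmat_on_def fmat_diag_def by auto

lemma fmat_on_transpose [simp]: "fmat_on n (fmat_transpose A) = fmat_on n A"
  unfolding fmat_on_def fmat_transpose_def by auto

lemma fmat_transpose_one [simp]: "fmat_transpose (fmat_one n) = fmat_one n"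
  unfolding fmat_transpose_def fmat_one_def by (intro ext) auto

lemma fmat_mult_entry: "i < n \<Longrightarrow> j < n \<Longrightarrow> fmat_mult n A B i j = (\<Sum>k<n. A i k * B k j)"
  unfolding fmat_mult_def by simp

lemma fmat_mult_assoc: "fmat_mult n (fmat_mult n A B) C = fmat_mult n A (fmat_mult n B C)"
proof (intro ext)
  fix i j
  show "fmat_mult n (fmat_mult n A B) C i j = fmat_mult n A (fmat_mult n B C) i j"
  proof (cases "i < n \<and> j < n")
    case True
    have "fmat_mult n (fmat_mult n A B) C i j = (\<Sum>k<n. \<Sum>l<n. A i l * B l k * C k j)"
      using True by (simp add: fmat_mult_entry sum_distrib_right)
    also have "\<dots> = (\<Sum>l<n. \<Sum>k<n. A i l * B l k * C k j)" by (rule sum.swap)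
    also have "\<dots> = fmat_mult n A (fmat_mult n B C) i j"
      using True by (simp add: fmat_mult_entry sum_distrib_left mult.assoc)
    finally show ?thesis .
  qed (auto simp: fmat_mult_def)
qed

lemma fmat_mult_one_left [simp]: "fmat_on n B \<Longrightarrow> fmat_mult n (fmat_one n) B = B"
  unfolding fmat_mult_def fmat_one_def fmat_on_def
  by (intro ext) (auto simp: if_distrib[of "\<lambda>x. x * _"] cong: if_cong)

lemma fmat_mult_one_right [simp]: "fmat_on n B \<Longrightarrow> fmat_mult n B (fmat_one n) = B"
  unfolding fmat_mult_def fmat_one_def fmat_on_def
  by (intro ext) (auto simp: if_distrib[of "\<lambda>x. _ * x"] cong: if_cong)

lemma fmat_transpose_mult:
  "fmat_transpose (fmat_mult n A B) = fmat_mult n (fmat_transpose B) (fmat_transpose A)"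
  unfolding fmat_transpose_def fmat_mult_def by (intro ext) (auto simp: mult.commute)

lemma fmat_mult_diag_entry:
  assumes "i < n" "j < n"
  shows "fmat_mult n U (fmat_diag n d) i j = U i j * d j"
proof -
  have "(\<Sum>k<n. U i k * (if k < n \<and> j < n \<and> k = j then d k else 0))
      = (\<Sum>k<n. if k = j then U i k * d j else 0)"
    by (rule sum.cong) auto
  then have "fmat_mult n U (fmat_diag n d) i j = (\<Sum>k<n. if k = j then U i k * d j else 0)"
    using assms unfolding fmat_mult_def fmat_diag_def by simp
  also have "\<dots> = U i j * d j" using assms by simp
  finally show ?thesis .
qed

lemma fmat_mult_diag_diag: "fmat_mult n (fmat_diag n f) (fmat_diag n g) = fmat_diag n (\<lambda>i. f i * g i)"
proof (intro ext)
  fix i j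
  show "fmat_mult n (fmat_diag n f) (fmat_diag n g) i j = fmat_diag n (\<lambda>i. f i * g i) i j"
  proof (cases "i < n \<and> j < n")
    case True
    then show ?thesis by (simp add: fmat_mult_diag_entry) (simp add: fmat_diag_def)
  qed (auto simp: fmat_mult_def fmat_diag_def)
qed

lemma fmat_trace_mult_commute: "fmat_trace n (fmat_mult n A B) = fmat_trace n (fmat_mult n B A)"
proof -
  have "fmat_trace n (fmat_mult n A B) = (\<Sum>j<n. \<Sum>k<n. A j k * B k j)"
    unfolding fmat_trace_def by (simp add: fmat_mult_entry)
  also have "\<dots> = (\<Sum>k<n. \<Sum>j<n. A j k * B k j)" by (rule sum.swap)
  also have "\<dots> = fmat_trace n (fmat_mult n B A)"
    unfolding fmat_trace_def by (simp add: fmat_mult_entry mult.commute)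
  finally show ?thesis .
qed

lemma fmat_trace_diag: "fmat_trace n (fmat_diag n f) = (\<Sum>i<n. f i)"
  unfolding fmat_trace_def fmat_diag_def by simp

lemma fmat_eigen_column:
  assumes "fmat_mult n A U = fmat_mult n U (fmat_diag n \<mu>)" "i < n" "j < n"
  shows "(\<Sum>k<n. A j k * U k i) = \<mu> i * U j i"
proof -
  have "fmat_mult n A U j i = U j i * \<mu> i"
    using assms by (simp add: fmat_mult_diag_entry)
  thus ?thesis using assms(2,3) by (simp add: fmat_mult_entry mult.commute)
qed

lemma orthogonal_fmat_columns:
  "orthogonal_fmat n U \<Longrightarrow> i < n \<Longrightarrow> j < n \<Longrightarrow> (\<Sum>k<n. U k i * U k j) = (if i = j then 1 else 0)"
  unfolding orthogonal_fmat_def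
  by (drule conjunct1[OF conjunct2], drule fun_cong[where x = i], drule fun_cong[where x = j])
     (simp add: fmat_mult_entry fmat_transpose_def fmat_one_def)

lemma orthogonal_fmat_rows:
  "orthogonal_fmat n U \<Longrightarrow> i < n \<Longrightarrow> j < n \<Longrightarrow> (\<Sum>k<n. U i k * U j k) = (if i = j then 1 else 0)"
  unfolding orthogonal_fmat_def
  by (drule conjunct2[OF conjunct2], drule fun_cong[where x = i], drule fun_cong[where x = j])
     (simp add: fmat_mult_entry fmat_transpose_def fmat_one_def)

lemma symmetric_eigenvalue_real:
  assumes sym: "fmat_transpose A = A"
    and eigen: "\<And>i. i < n \<Longrightarrow> (\<Sum>k<n. complex_of_real (A i k) * w k) = l * w i"
    and nonzero: "k0 < n" "w k0 \<noteq> 0"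
  shows "Im l = 0"
proof -
  define s where "s = (\<Sum>i<n. cnj (w i) * (\<Sum>k<n. complex_of_real (A i k) * w k))"
  define N where "N = (\<Sum>i<n. (cmod (w i))^2)"
  have "s = (\<Sum>i<n. cnj (w i) * (l * w i))"
    unfolding s_def by (rule sum.cong) (simp_all add: eigen)
  also have "\<dots> = (\<Sum>i<n. l * (cnj (w i) * w i))" by (simp add: mult.commute mult.left_commute)
  also have "\<dots> = l * complex_of_real N"
    unfolding N_def sum_distrib_left of_real_sum
    by (rule sum.cong, simp, subst complex_norm_square, simp add: mult.commute)
  finally have s_eq: "s = l * complex_of_real N" .
  have A_sym: "A i k = A k i" for i k using sym unfolding fmat_transpose_def by metis
  have "cnj s = (\<Sum>i<n. \<Sum>k<n. complex_of_real (A i k) * w i * cnj (w k))"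
    unfolding s_def by (simp add: cnj_sum sum_distrib_left mult.commute mult.left_commute)
  also have "\<dots> = (\<Sum>k<n. \<Sum>i<n. complex_of_real (A k i) * w i * cnj (w k))"
    by (subst sum.swap) (simp add: A_sym)
  also have "\<dots> = s" unfolding s_def
    by (simp add: sum_distrib_left mult.commute mult.left_commute)
  finally have "Im s = 0" by (metis cnj.sel(2) neg_equal_zero)
  moreover have "N > 0" unfolding N_def by (rule sum_pos2[of _ k0]) (use nonzero in auto)
  ultimately show ?thesis using s_eq by simp
qed

lemma symmetric_has_real_eigenvector:
  assumes sym: "fmat_transpose A = A" and n: "n > 0"
  shows "\<exists>e x. (\<Sum>k<n. (x k)^2) = 1 \<and> (\<forall>i<n. (\<Sum>k<n. A i k * x k) = e * x i)"
proof -
  define M :: "complex mat" where "M = mat n n (\<lambda>(i,j). complex_of_real (A i j))"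
  have M: "M \<in> carrier_mat n n" unfolding M_def by simp
  from char_poly_factorized[OF M] obtain as where
    cp: "char_poly M = (\<Prod>a\<leftarrow>as. [:- a, 1:])" and len: "length as = n" by blast
  from len n obtain l where l: "l \<in> set as" by (cases as) auto
  have "poly (char_poly M) l = 0" unfolding cp using l
    by (simp add: poly_prod_list prod_list_zero_iff)
  hence "eigenvalue M l" using eigenvalue_root_char_poly[OF M] by simp
  then obtain v where "eigenvector M v l" unfolding eigenvalue_def by blast
  hence v: "v \<in> carrier_vec n" "v \<noteq> 0\<^sub>v n" and Mv: "M *\<^sub>v v = l \<cdot>\<^sub>v v"
    unfolding eigenvector_def using M by auto
  have eigen: "(\<Sum>k<n. complex_of_real (A i k) * v $ k) = l * v $ i" if "i < n" for i
  proof -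
    have "(M *\<^sub>v v) $ i = (\<Sum>k<n. complex_of_real (A i k) * v $ k)"
      using that M v unfolding M_def
      by (auto simp: mult_mat_vec_def scalar_prod_def lessThan_atLeast0 intro!: sum.cong)
    thus ?thesis using Mv that v by simp
  qed
  obtain k0 where k0: "k0 < n" "v $ k0 \<noteq> 0"
    using v by (metis eq_vecI index_zero_vec(1) index_zero_vec(2) carrier_vecD)
  have "Im l = 0" by (rule symmetric_eigenvalue_real[OF sym eigen k0])
  then have l_real: "l = complex_of_real (Re l)" by (simp add: complex_eq_iff)
  have re: "(\<Sum>k<n. A i k * Re (v $ k)) = Re l * Re (v $ i)"
    and im: "(\<Sum>k<n. A i k * Im (v $ k)) = Re l * Im (v $ i)" if "i < n" for i
    using arg_cong[OF eigen[OF that], of Re] arg_cong[OF eigen[OF that], of Im]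
    by (subst (asm) (2) l_real, simp add: Re_sum Im_sum)+
  obtain x where x0: "x k0 \<noteq> 0" and x: "\<forall>i<n. (\<Sum>k<n. A i k * x k) = Re l * x i"
  proof (cases "Re (v $ k0) = 0")
    case True
    then have "Im (v $ k0) \<noteq> 0" using k0 by (simp add: complex_eq_iff)
    then show thesis using im that[of "\<lambda>k. Im (v $ k)"] by auto
  next
    case False
    then show thesis using re that[of "\<lambda>k. Re (v $ k)"] by auto
  qed
  define c where "c = sqrt (\<Sum>k<n. (x k)^2)"
  have "(\<Sum>k<n. (x k)^2) > 0" by (rule sum_pos2[of _ k0]) (use k0 x0 in auto)
  then have "c > 0" and "(\<Sum>k<n. (x k / c)^2) = 1"
    unfolding c_def by (simp_all add: power_divide sum_divide_distrib[symmetric])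
  moreover have "\<forall>i<n. (\<Sum>k<n. A i k * (x k / c)) = Re l * (x i / c)"
    using x by (simp add: sum_divide_distrib[symmetric])
  ultimately show ?thesis by (intro exI[of _ "Re l"] exI[of _ "\<lambda>k. x k / c"]) auto
qed

lemma orthogonal_fmat_mult:
  assumes "orthogonal_fmat n U" "orthogonal_fmat n V"
  shows "orthogonal_fmat n (fmat_mult n U V)"
proof -
  have "fmat_mult n (fmat_transpose (fmat_mult n U V)) (fmat_mult n U V)
      = fmat_mult n (fmat_transpose V) (fmat_mult n (fmat_mult n (fmat_transpose U) U) V)"
    unfolding fmat_transpose_mult by (simp only: fmat_mult_assoc)
  moreover have "fmat_mult n (fmat_mult n U V) (fmat_transpose (fmat_mult n U V))
      = fmat_mult n U (fmat_mult n (fmat_mult n V (fmat_transpose V)) (fmat_transpose U))"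
    unfolding fmat_transpose_mult by (simp only: fmat_mult_assoc)
  ultimately show ?thesis using assms unfolding orthogonal_fmat_def by simp
qed

lemma reflection_square:
  fixes w :: "nat \<Rightarrow> real"
  assumes w: "(\<Sum>k<n. (w k)^2) = 2 * t" and t: "t > 0"
  defines "H \<equiv> \<lambda>i j. if i < n \<and> j < n then (if i = j then 1 else 0) - w i * w j / t else 0"
  shows "fmat_mult n H H = fmat_one n"
proof (intro ext)
  fix i j
  show "fmat_mult n H H i j = fmat_one n i j"
  proof (cases "i < n \<and> j < n")
    case True
    define a where "a p q = w p * w q / t" for p q
    define \<delta> where "\<delta> p q = (if p = q then 1 else (0::real))" for p q :: nat
    have \<delta>\<delta>: "(\<Sum>k<n. \<delta> i k * \<delta> k j) = \<delta> i j"
      using True by (simp add: \<delta>_def if_distrib[of "\<lambda>x. x * _"] cong: if_cong)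
    have \<delta>a: "(\<Sum>k<n. \<delta> i k * a k j) = a i j"
      using True by (simp add: \<delta>_def if_distrib[of "\<lambda>x. x * _"] cong: if_cong)
    have a\<delta>: "(\<Sum>k<n. a i k * \<delta> k j) = a i j"
      using True by (simp add: \<delta>_def if_distrib[of "\<lambda>x. _ * x"] cong: if_cong)
    have aa: "(\<Sum>k<n. a i k * a k j) = w i * w j / t^2 * (2 * t)"
    proof -
      have "(\<Sum>k<n. a i k * a k j) = (\<Sum>k<n. w i * w j / t^2 * (w k)^2)"
        by (rule sum.cong) (auto simp: a_def power2_eq_square)
      thus ?thesis by (simp only: sum_distrib_left[symmetric] w)
    qed
    have "fmat_mult n H H i j = (\<Sum>k<n. (\<delta> i k - a i k) * (\<delta> k j - a k j))"
      using True unfolding H_def a_def \<delta>_def by (auto simp: fmat_mult_entry intro!: sum.cong)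
    also have "\<dots> = (\<Sum>k<n. \<delta> i k * \<delta> k j - \<delta> i k * a k j - a i k * \<delta> k j + a i k * a k j)"
      by (rule sum.cong) (auto simp: algebra_simps)
    also have "\<dots> = \<delta> i j - 2 * a i j + w i * w j / t^2 * (2 * t)"
      by (simp add: sum.distrib sum_subtractf \<delta>\<delta> \<delta>a a\<delta> aa)
    also have "\<dots> = fmat_one n i j"
      using True t by (simp add: a_def \<delta>_def fmat_one_def power2_eq_square field_simps)
    finally show ?thesis .
  qed (auto simp: fmat_mult_def fmat_one_def)
qed

text \<open>A Householder reflection whose first column is the unit vector x
  (the identity if x is the first basis vector).\<close>
lemma unit_vector_reflection:
  assumes x: "(\<Sum>k<n. (x k)^2) = 1" and n: "n > 0"
  shows "\<exists>H. fmat_on n H \<and> fmat_transpose H = H \<and> fmat_mult n H H = fmat_one n \<and>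
             (\<forall>i<n. H i 0 = x i)"
proof -
  have split: "(\<Sum>k<n. f k) = f 0 + (\<Sum>k\<in>{..<n}-{0}. f k)" for f :: "nat \<Rightarrow> real"
    using n by (simp add: sum.remove)
  have rest_nonneg: "(\<Sum>k\<in>{..<n}-{0}. (x k)^2) \<ge> 0" by (rule sum_nonneg) auto
  then have "(x 0)^2 \<le> 1" using x split[of "\<lambda>k. (x k)^2"] by linarith
  then have "x 0 \<le> 1" by (metis abs_le_square_iff abs_one abs_ge_self one_power2 order_trans)
  then consider "x 0 = 1" | "x 0 < 1" by linarith
  then show ?thesis
  proof cases
    case 1
    then have "(\<Sum>k\<in>{..<n}-{0}. (x k)^2) = 0" using x split[of "\<lambda>k. (x k)^2"] by simp
    then have "x i = 0" if "i < n" "i \<noteq> 0" for i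
      using sum_nonneg_eq_0_iff[of "{..<n}-{0}" "\<lambda>k. (x k)^2"] that by auto
    then have "\<forall>i<n. fmat_one n i 0 = x i" using 1 n unfolding fmat_one_def by auto
    then show ?thesis by (intro exI[of _ "fmat_one n"]) auto
  next
    case 2
    define t where "t = 1 - x 0"
    define w where "w i = x i - (if i = 0 then 1 else 0)" for i
    define H where "H = (\<lambda>i j. if i < n \<and> j < n then (if i = j then 1 else 0) - w i * w j / t else 0)"
    have t: "t > 0" using 2 unfolding t_def by simp
    have "(\<Sum>k<n. (w k)^2)
        = (\<Sum>k<n. (x k)^2 - 2 * (if k = 0 then x k else 0) + (if k = 0 then 1 else 0))"
      unfolding w_def by (rule sum.cong) (auto simp: power2_eq_square algebra_simps)
    also have "\<dots> = (\<Sum>k<n. (x k)^2) - 2 * x 0 + 1"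
      using n by (simp add: sum.distrib sum_subtractf sum_distrib_left[symmetric])
    finally have "(\<Sum>k<n. (w k)^2) = 2 * t" using x unfolding t_def by simp
    then have "fmat_mult n H H = fmat_one n" unfolding H_def using t by (rule reflection_square)
    moreover have "fmat_on n H" "fmat_transpose H = H"
      unfolding H_def fmat_on_def fmat_transpose_def by (auto simp: mult.commute intro!: ext)
    moreover have "\<forall>i<n. H i 0 = x i"
      using n t unfolding H_def w_def t_def by (auto simp: field_simps)
    ultimately show ?thesis by blast
  qed
qed

lemma reflection_deflates:
  assumes H: "fmat_mult n H H = fmat_one n" "\<forall>i<n. H i 0 = x i"
    and eigen: "\<forall>i<n. (\<Sum>k<n. A i k * x k) = e * x i" and i: "i < n"
  shows "fmat_mult n (fmat_mult n H A) H i 0 = (if i = 0 then e else 0)"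
proof -
  have n: "0 < n" using i by simp
  have "fmat_mult n (fmat_mult n H A) H i 0 = (\<Sum>l<n. \<Sum>m<n. H i m * A m l * x l)"
    using i n H(2) by (simp add: fmat_mult_entry sum_distrib_right)
  also have "\<dots> = (\<Sum>m<n. \<Sum>l<n. H i m * A m l * x l)" by (rule sum.swap)
  also have "\<dots> = (\<Sum>m<n. e * (H i m * H m 0))"
    using eigen H(2) by (intro sum.cong) (auto simp: sum_distrib_left[symmetric] mult.assoc)
  also have "\<dots> = e * fmat_mult n H H i 0" using i n by (simp add: fmat_mult_entry sum_distrib_left)
  finally show ?thesis using i n unfolding H(1) fmat_one_def by auto
qed

definition fmat_block :: "nat \<Rightarrow> real \<Rightarrow> fmat \<Rightarrow> fmat" where
  "fmat_block n a B = (\<lambda>i j. if i < Suc n \<and> j < Suc n then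
     (if i = 0 \<and> j = 0 then a else if i = 0 \<or> j = 0 then 0 else B (i - 1) (j - 1)) else 0)"

lemma fmat_on_block [simp]: "fmat_on (Suc n) (fmat_block n a B)"
  unfolding fmat_on_def fmat_block_def by auto

lemma fmat_transpose_block: "fmat_transpose (fmat_block n a B) = fmat_block n a (fmat_transpose B)"
  unfolding fmat_transpose_def fmat_block_def by (intro ext) auto

lemma fmat_mult_block:
  "fmat_mult (Suc n) (fmat_block n a B) (fmat_block n b C) = fmat_block n (a * b) (fmat_mult n B C)"
proof (intro ext)
  fix i j
  show "fmat_mult (Suc n) (fmat_block n a B) (fmat_block n b C) i j = fmat_block n (a * b) (fmat_mult n B C) i j"
  proof (cases "i < Suc n \<and> j < Suc n")
    case True
    then have "fmat_mult (Suc n) (fmat_block n a B) (fmat_block n b C) i j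
        = fmat_block n a B i 0 * fmat_block n b C 0 j
          + (\<Sum>l<n. fmat_block n a B i (Suc l) * fmat_block n b C (Suc l) j)"
      by (simp add: fmat_mult_entry sum.lessThan_Suc_shift del: sum.lessThan_Suc)
    with True show ?thesis
      by (cases i; cases j) (auto simp: fmat_mult_entry fmat_block_def)
  qed (auto simp: fmat_mult_def fmat_block_def)
qed

lemma fmat_one_Suc: "fmat_one (Suc n) = fmat_block n 1 (fmat_one n)"
  unfolding fmat_one_def fmat_block_def by (intro ext) auto

lemma fmat_diag_Suc: "fmat_diag (Suc n) \<mu> = fmat_block n (\<mu> 0) (fmat_diag n (\<lambda>i. \<mu> (Suc i)))"
  unfolding fmat_diag_def fmat_block_def by (intro ext) auto

lemma orthogonal_fmat_block: "orthogonal_fmat n V \<Longrightarrow> orthogonal_fmat (Suc n) (fmat_block n 1 V)"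
  unfolding orthogonal_fmat_def by (simp add: fmat_transpose_block fmat_mult_block fmat_one_Suc)

lemma fmat_block_decompose:
  assumes "fmat_on (Suc n) A"
    and "\<forall>i<Suc n. A i 0 = (if i = 0 then e else 0)" "\<forall>j<Suc n. A 0 j = (if j = 0 then e else 0)"
  shows "A = fmat_block n e (\<lambda>i j. if i < n \<and> j < n then A (Suc i) (Suc j) else 0)"
proof (intro ext)
  fix i j
  show "A i j = fmat_block n e (\<lambda>i j. if i < n \<and> j < n then A (Suc i) (Suc j) else 0) i j"
    using assms unfolding fmat_on_def fmat_block_def by (cases i; cases j) auto
qed

theorem symmetric_fmat_diagonalizable:
  assumes "fmat_on n A" "fmat_transpose A = A"
  shows "\<exists>U \<mu>. orthogonal_fmat n U \<and> fmat_mult n A U = fmat_mult n U (fmat_diag n \<mu>)"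
  using assms
proof (induction n arbitrary: A)
  case 0
  show ?case
    by (intro exI[of _ "\<lambda>i j. 0"]) (auto simp: orthogonal_fmat_def fmat_on_def fmat_mult_def fmat_one_def)
next
  case (Suc n A)
  obtain e x where x: "(\<Sum>k<Suc n. (x k)^2) = 1" and eigen: "\<forall>i<Suc n. (\<Sum>k<Suc n. A i k * x k) = e * x i"
    using symmetric_has_real_eigenvector[OF Suc.prems(2)] by blast
  obtain H where H: "fmat_on (Suc n) H" "fmat_transpose H = H" "fmat_mult (Suc n) H H = fmat_one (Suc n)"
    and H0: "\<forall>i<Suc n. H i 0 = x i"
    using unit_vector_reflection[OF x] by blast
  define A' where "A' = fmat_mult (Suc n) (fmat_mult (Suc n) H A) H"
  have A'_sym: "fmat_transpose A' = A'"
    unfolding A'_def fmat_transpose_mult H(2) Suc.prems(2) fmat_mult_assoc ..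
  have col: "\<forall>i<Suc n. A' i 0 = (if i = 0 then e else 0)"
    unfolding A'_def using reflection_deflates[OF H(3) H0 eigen] by blast
  then have row: "\<forall>j<Suc n. A' 0 j = (if j = 0 then e else 0)"
    using A'_sym unfolding fmat_transpose_def by metis
  define B where "B = (\<lambda>i j. if i < n \<and> j < n then A' (Suc i) (Suc j) else 0)"
  have A'_block: "A' = fmat_block n e B"
    unfolding B_def A'_def by (rule fmat_block_decompose) (use col row A'_def in auto)
  have "fmat_on n B" "fmat_transpose B = B"
    using A'_sym unfolding B_def fmat_on_def fmat_transpose_def by (auto intro!: ext) metis
  then obtain V \<nu> where V: "orthogonal_fmat n V" and VB: "fmat_mult n B V = fmat_mult n V (fmat_diag n \<nu>)"
    using Suc.IH by blast
  define W where "W = fmat_block n 1 V"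
  have H_orth: "orthogonal_fmat (Suc n) H" using H unfolding orthogonal_fmat_def by simp
  have "fmat_mult (Suc n) A (fmat_mult (Suc n) H W)
      = fmat_mult (Suc n) (fmat_mult (Suc n) H H) (fmat_mult (Suc n) A (fmat_mult (Suc n) H W))"
    by (simp add: H(3))
  also have "\<dots> = fmat_mult (Suc n) H (fmat_mult (Suc n) A' W)"
    unfolding A'_def by (simp only: fmat_mult_assoc)
  also have "fmat_mult (Suc n) A' W = fmat_mult (Suc n) W (fmat_diag (Suc n) (case_nat e \<nu>))"
    unfolding A'_block W_def fmat_diag_Suc fmat_mult_block by (simp add: VB)
  finally show ?case
    using orthogonal_fmat_mult[OF H_orth orthogonal_fmat_block[OF V]] unfolding W_def
    by (intro exI[of _ "fmat_mult (Suc n) H W"] exI[of _ "case_nat e \<nu>"]) (simp add: W_def fmat_mult_assoc)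
qed

lemma fmat_conj_diag_entry:
  assumes "j < n" "k < n"
  shows "fmat_conj_diag n U f j k = (\<Sum>i<n. f i * U j i * U k i)"
proof -
  have "fmat_conj_diag n U f j k = (\<Sum>i<n. fmat_mult n U (fmat_diag n f) j i * U k i)"
    unfolding fmat_conj_diag_def using assms by (simp add: fmat_mult_entry fmat_transpose_def)
  also have "\<dots> = (\<Sum>i<n. f i * U j i * U k i)"
    using assms by (intro sum.cong) (auto simp: fmat_mult_diag_entry)
  finally show ?thesis .
qed

lemma fmat_conj_diag_mult:
  assumes "orthogonal_fmat n U"
  shows "fmat_mult n (fmat_conj_diag n U f) (fmat_conj_diag n U g) = fmat_conj_diag n U (\<lambda>i. f i * g i)"
proof -
  have "fmat_mult n (fmat_conj_diag n U f) (fmat_conj_diag n U g)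
      = fmat_mult n U (fmat_mult n (fmat_diag n f) (fmat_mult n (fmat_mult n (fmat_transpose U) U)
          (fmat_mult n (fmat_diag n g) (fmat_transpose U))))"
    unfolding fmat_conj_diag_def by (simp only: fmat_mult_assoc)
  also have "\<dots> = fmat_conj_diag n U (\<lambda>i. f i * g i)"
    using assms unfolding orthogonal_fmat_def fmat_conj_diag_def
    by (simp add: fmat_mult_assoc[symmetric] fmat_mult_diag_diag)
  finally show ?thesis .
qed

lemma fmat_trace_conj_diag:
  assumes "orthogonal_fmat n U"
  shows "fmat_trace n (fmat_conj_diag n U f) = (\<Sum>i<n. f i)"
proof -
  have "fmat_trace n (fmat_conj_diag n U f) = fmat_trace n (fmat_mult n U (fmat_mult n (fmat_diag n f) (fmat_transpose U)))"
    unfolding fmat_conj_diag_def by (simp only: fmat_mult_assoc)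
  also have "\<dots> = fmat_trace n (fmat_mult n (fmat_mult n (fmat_diag n f) (fmat_transpose U)) U)"
    by (rule fmat_trace_mult_commute)
  also have "\<dots> = fmat_trace n (fmat_diag n f)"
    using assms unfolding orthogonal_fmat_def by (simp add: fmat_mult_assoc)
  finally show ?thesis by (simp add: fmat_trace_diag)
qed

lemma fmat_conj_diag_sum_squares:
  assumes "orthogonal_fmat n U"
  shows "(\<Sum>j<n. \<Sum>k<n. (fmat_conj_diag n U f j k)^2) = (\<Sum>i<n. (f i)^2)"
proof -
  have sym: "fmat_conj_diag n U f j k = fmat_conj_diag n U f k j" if "j < n" "k < n" for j k
    using that by (simp add: fmat_conj_diag_entry mult.commute mult.left_commute)
  have "(\<Sum>j<n. \<Sum>k<n. (fmat_conj_diag n U f j k)^2)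
      = fmat_trace n (fmat_mult n (fmat_conj_diag n U f) (fmat_conj_diag n U f))"
    unfolding fmat_trace_def
    by (intro sum.cong) (auto simp: fmat_mult_entry power2_eq_square sym intro!: sum.cong)
  also have "\<dots> = (\<Sum>i<n. (f i)^2)"
    by (simp add: fmat_conj_diag_mult[OF assms] fmat_trace_conj_diag[OF assms] power2_eq_square)
  finally show ?thesis .
qed

lemma fmat_eq_conj_diag:
  assumes "fmat_on n A" "orthogonal_fmat n U" "fmat_mult n A U = fmat_mult n U (fmat_diag n \<mu>)"
  shows "A = fmat_conj_diag n U \<mu>"
proof -
  have "A = fmat_mult n A (fmat_mult n U (fmat_transpose U))"
    using assms(1,2) unfolding orthogonal_fmat_def by simp
  also have "\<dots> = fmat_conj_diag n U \<mu>"
    unfolding fmat_conj_diag_def by (simp add: fmat_mult_assoc[symmetric] assms(3))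
  finally show ?thesis .
qed

definition mat_of_fmat :: "nat \<Rightarrow> fmat \<Rightarrow> real mat" where
  "mat_of_fmat n F = mat n n (\<lambda>(i, j). F i j)"

lemma mat_of_fmat_carrier [simp]: "mat_of_fmat n A \<in> carrier_mat n n"
  unfolding mat_of_fmat_def by simp

lemma mat_of_fmat_dim [simp]: "dim_row (mat_of_fmat n A) = n" "dim_col (mat_of_fmat n A) = n"
  unfolding mat_of_fmat_def by simp_all

lemma mat_of_fmat_mult: "mat_of_fmat n (fmat_mult n A B) = mat_of_fmat n A * mat_of_fmat n B"
  by (rule eq_matI)
     (auto simp: mat_of_fmat_def fmat_mult_def scalar_prod_def lessThan_atLeast0 intro!: sum.cong)

lemma mat_of_fmat_one: "mat_of_fmat n (fmat_one n) = 1\<^sub>m n"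
  by (rule eq_matI) (auto simp: mat_of_fmat_def fmat_one_def)

lemma proots_prod_linear: "proots (\<Prod>a\<leftarrow>as. [:- a, 1:]) = mset (as :: real list)"
proof (induction as)
  case (Cons a as)
  have "(\<Prod>a\<leftarrow>as. [:- a, 1:]) \<noteq> 0" by (auto simp: prod_list_zero_iff)
  then have "proots ([:- a, 1:] * (\<Prod>a\<leftarrow>as. [:- a, 1:])) = proots [:- a, 1:] + proots (\<Prod>a\<leftarrow>as. [:- a, 1:])"
    by (intro proots_mult) auto
  then show ?case using Cons proots_linear_factor[of "- a"] by simp
qed simp

lemma proots_char_poly_conj_diag:
  assumes "orthogonal_fmat n U"
  shows "proots (char_poly (mat_of_fmat n (fmat_conj_diag n U \<mu>))) = mset (map \<mu> [0..<n])"
proof -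
  let ?D = "mat_of_fmat n (fmat_diag n \<mu>)"
  have "mat_of_fmat n U * mat_of_fmat n (fmat_transpose U) = 1\<^sub>m n"
    "mat_of_fmat n (fmat_transpose U) * mat_of_fmat n U = 1\<^sub>m n"
    using assms unfolding orthogonal_fmat_def by (simp_all add: mat_of_fmat_mult[symmetric] mat_of_fmat_one)
  then have "similar_mat_wit (mat_of_fmat n (fmat_conj_diag n U \<mu>)) ?D
      (mat_of_fmat n U) (mat_of_fmat n (fmat_transpose U))"
    unfolding similar_mat_wit_def Let_def fmat_conj_diag_def by (simp add: mat_of_fmat_mult[symmetric])
  then have "char_poly (mat_of_fmat n (fmat_conj_diag n U \<mu>)) = char_poly ?D"
    by (intro char_poly_similar) (auto simp: similar_mat_def)
  also have "\<dots> = (\<Prod>a\<leftarrow>diag_mat ?D. [:- a, 1:])"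
    by (rule char_poly_upper_triangular[of _ n])
       (auto simp: mat_of_fmat_def fmat_diag_def upper_triangular_def)
  also have "diag_mat ?D = map \<mu> [0..<n]"
    by (auto simp: diag_mat_def mat_of_fmat_def fmat_diag_def intro!: nth_equalityI)
  finally show ?thesis by (simp only: proots_prod_linear)
qed

lemma fmat_conj_diag_eigen_column:
  assumes "orthogonal_fmat n U" "i < n" "j < n"
  shows "(\<Sum>k<n. fmat_conj_diag n U \<mu> j k * U k i) = \<mu> i * U j i"
proof -
  have "fmat_mult n (fmat_conj_diag n U \<mu>) U = fmat_mult n U (fmat_diag n \<mu>)"
    using assms(1) unfolding orthogonal_fmat_def fmat_conj_diag_def by (simp add: fmat_mult_assoc)
  then show ?thesis using assms(2,3) by (rule fmat_eigen_column)
qed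

lemma fmat_conj_diag_one:
  assumes "orthogonal_fmat n U"
  shows "fmat_conj_diag n U (\<lambda>_. 1) = fmat_one n"
proof -
  have "fmat_diag n (\<lambda>_. 1) = fmat_one n" unfolding fmat_diag_def fmat_one_def ..
  then show ?thesis using assms unfolding fmat_conj_diag_def orthogonal_fmat_def by simp
qed

lemma fmat_conj_diag_shift:
  assumes "orthogonal_fmat n U" "j < n" "k < n"
  shows "fmat_conj_diag n U (\<lambda>i. g i - c) j k = fmat_conj_diag n U g j k - (if j = k then c else 0)"
proof -
  have "fmat_conj_diag n U (\<lambda>i. g i - c) j k = fmat_conj_diag n U g j k - c * (\<Sum>i<n. U j i * U k i)"
    using assms(2,3)
    by (simp add: fmat_conj_diag_entry left_diff_distrib sum_subtractf sum_distrib_left mult.assoc)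
  then show ?thesis using orthogonal_fmat_rows[OF assms] by simp
qed

lemma fmat_conj_diag_row_sum:
  assumes "j < n"
  shows "(\<Sum>k<n. fmat_conj_diag n U f j k) = (\<Sum>i<n. f i * U j i * (\<Sum>k<n. U k i))"
proof -
  have "(\<Sum>k<n. fmat_conj_diag n U f j k) = (\<Sum>k<n. \<Sum>i<n. f i * U j i * U k i)"
    using assms by (simp add: fmat_conj_diag_entry)
  also have "\<dots> = (\<Sum>i<n. \<Sum>k<n. f i * U j i * U k i)" by (rule sum.swap)
  also have "\<dots> = (\<Sum>i<n. f i * U j i * (\<Sum>k<n. U k i))" by (simp add: sum_distrib_left)
  finally show ?thesis .
qed

lemma fmat_conj_diag_total_sum:
  "(\<Sum>j<n. \<Sum>k<n. fmat_conj_diag n U f j k) = (\<Sum>i<n. f i * (\<Sum>k<n. U k i)^2)"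
proof -
  have "(\<Sum>j<n. \<Sum>k<n. fmat_conj_diag n U f j k) = (\<Sum>j<n. \<Sum>i<n. f i * U j i * (\<Sum>k<n. U k i))"
    by (simp add: fmat_conj_diag_row_sum)
  also have "\<dots> = (\<Sum>i<n. \<Sum>j<n. f i * U j i * (\<Sum>k<n. U k i))" by (rule sum.swap)
  also have "\<dots> = (\<Sum>i<n. f i * (\<Sum>k<n. U k i)^2)"
    by (simp add: sum_distrib_left[symmetric] sum_distrib_right[symmetric] power2_eq_square mult.assoc)
  finally show ?thesis .
qed

lemma fmat_conj_diag_rayleigh:
  assumes "orthogonal_fmat n U" "i < n"
  shows "(\<Sum>j<n. \<Sum>k<n. U j i * fmat_conj_diag n U \<mu> j k * U k i) = \<mu> i"
proof -
  have "(\<Sum>j<n. \<Sum>k<n. U j i * fmat_conj_diag n U \<mu> j k * U k i) = (\<Sum>j<n. \<mu> i * (U j i * U j i))"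
    using fmat_conj_diag_eigen_column[OF assms]
    by (intro sum.cong) (simp_all add: sum_distrib_left[symmetric] mult.assoc mult.left_commute)
  also have "\<dots> = \<mu> i" using orthogonal_fmat_columns[OF assms(1,2,2)]
    by (simp add: sum_distrib_left[symmetric])
  finally show ?thesis .
qed

section \<open>Inequalities for real sequences\<close>

lemma sum_sum_const_of_sum_squares:
  fixes M :: fmat
  assumes n: "n > 0" and sum: "(\<Sum>j<n. \<Sum>k<n. M j k) = real n * c"
    and sum_sq: "(\<Sum>j<n. \<Sum>k<n. (M j k)^2) = c^2" and jk: "j < n" "k < n"
  shows "M j k = c / real n"
proof -
  define t where "t = c / real n"
  have "(\<Sum>j<n. \<Sum>k<n. (M j k - t)^2)
      = (\<Sum>j<n. \<Sum>k<n. (M j k)^2) - 2 * t * (\<Sum>j<n. \<Sum>k<n. M j k) + real n * real n * t^2"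
    by (simp add: power2_eq_square algebra_simps sum.distrib sum_subtractf sum_distrib_left)
  also have "\<dots> = 0" unfolding sum sum_sq t_def using n by (simp add: power2_eq_square field_simps)
  finally have "(\<Sum>j<n. \<Sum>k<n. (M j k - t)^2) = 0" .
  then have "(\<Sum>k<n. (M j k - t)^2) = 0"
    using sum_nonneg_eq_0_iff[of "{..<n}" "\<lambda>j. \<Sum>k<n. (M j k - t)^2"] jk by (simp add: sum_nonneg)
  then have "(M j k - t)^2 = 0" using sum_nonneg_eq_0_iff[of "{..<n}" "\<lambda>k. (M j k - t)^2"] jk by simp
  then show ?thesis unfolding t_def by simp
qed

lemma lagrange_identity:
  fixes a :: "nat \<Rightarrow> real"
  assumes "finite R"
  shows "real (card R) * (\<Sum>i\<in>R. (a i)^2) - (\<Sum>i\<in>R. a i)^2 = (\<Sum>i\<in>R. \<Sum>j\<in>R. (a i - a j)^2) / 2"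
proof -
  have "(\<Sum>i\<in>R. \<Sum>j\<in>R. (a i - a j)^2) = (\<Sum>i\<in>R. \<Sum>j\<in>R. (a i)^2 + (a j)^2 - 2 * (a i * a j))"
    by (intro sum.cong) (auto simp: power2_eq_square algebra_simps)
  also have "\<dots> = (\<Sum>i\<in>R. \<Sum>j\<in>R. (a i)^2) + (\<Sum>i\<in>R. \<Sum>j\<in>R. (a j)^2)
      - 2 * (\<Sum>i\<in>R. \<Sum>j\<in>R. a i * a j)"
    by (simp add: sum.distrib sum_subtractf sum_distrib_left)
  also have "(\<Sum>i\<in>R. \<Sum>j\<in>R. (a i)^2) = real (card R) * (\<Sum>i\<in>R. (a i)^2)"
    by (simp add: sum_distrib_left mult.commute)
  also have "(\<Sum>i\<in>R. \<Sum>j\<in>R. (a j)^2) = real (card R) * (\<Sum>i\<in>R. (a i)^2)"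
    by simp
  also have "(\<Sum>i\<in>R. \<Sum>j\<in>R. a i * a j) = (\<Sum>i\<in>R. a i)^2"
    by (simp add: power2_eq_square sum_product)
  finally show ?thesis by simp
qed

lemma sum_abs_cauchy_schwarz:
  fixes a :: "nat \<Rightarrow> real"
  assumes R: "finite R"
  shows "(\<Sum>i\<in>R. \<bar>a i\<bar>) \<le> sqrt (real (card R) * (\<Sum>i\<in>R. (a i)^2))"
    and "(\<Sum>i\<in>R. \<bar>a i\<bar>) = sqrt (real (card R) * (\<Sum>i\<in>R. (a i)^2)) \<Longrightarrow> i \<in> R \<Longrightarrow> j \<in> R \<Longrightarrow>
         \<bar>a i\<bar> = \<bar>a j\<bar>"
proof -
  let ?D = "\<Sum>i\<in>R. \<Sum>j\<in>R. (\<bar>a i\<bar> - \<bar>a j\<bar>)^2"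
  have "(\<Sum>i\<in>R. \<bar>a i\<bar>^2) = (\<Sum>i\<in>R. (a i)^2)" by simp
  then have L: "real (card R) * (\<Sum>i\<in>R. (a i)^2) - (\<Sum>i\<in>R. \<bar>a i\<bar>)^2 = ?D / 2"
    using lagrange_identity[OF R, of "\<lambda>i. \<bar>a i\<bar>"] by (simp only:)
  have "?D \<ge> 0" by (intro sum_nonneg) auto
  then have le: "(\<Sum>i\<in>R. \<bar>a i\<bar>)^2 \<le> real (card R) * (\<Sum>i\<in>R. (a i)^2)" using L by linarith
  then show "(\<Sum>i\<in>R. \<bar>a i\<bar>) \<le> sqrt (real (card R) * (\<Sum>i\<in>R. (a i)^2))"
    by (rule real_le_rsqrt)
  assume eq: "(\<Sum>i\<in>R. \<bar>a i\<bar>) = sqrt (real (card R) * (\<Sum>i\<in>R. (a i)^2))" and ij: "i \<in> R" "j \<in> R"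
  have "0 \<le> real (card R) * (\<Sum>i\<in>R. (a i)^2)" using le by (rule order_trans[OF zero_le_power2])
  then have "(\<Sum>i\<in>R. \<bar>a i\<bar>)^2 = real (card R) * (\<Sum>i\<in>R. (a i)^2)"
    unfolding eq by simp
  then have "?D = 0" using L by simp
  then have "(\<Sum>j\<in>R. (\<bar>a i\<bar> - \<bar>a j\<bar>)^2) = 0"
    using sum_nonneg_eq_0_iff[OF R, of "\<lambda>i. \<Sum>j\<in>R. (\<bar>a i\<bar> - \<bar>a j\<bar>)^2"] ij by (simp add: sum_nonneg)
  then have "\<forall>k\<in>R. (\<bar>a i\<bar> - \<bar>a k\<bar>)^2 = 0" by (subst (asm) sum_nonneg_eq_0_iff[OF R]) auto
  then have "(\<bar>a i\<bar> - \<bar>a j\<bar>)^2 = 0" using ij by blast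
  then show "\<bar>a i\<bar> = \<bar>a j\<bar>" by simp
qed

text \<open>Going from a to b > a the first summand gains b - a while the root loses
  (b^2 - a^2) N / (sum of the two roots), which is more since the roots are at most N a and N b.\<close>
lemma plus_sqrt_deficit_antimono:
  fixes a b X N :: real
  assumes N: "N \<ge> 1" and a0: "0 \<le> a" and ab: "a \<le> b" and bX: "b^2 \<le> X" and Xa: "X \<le> (N + 1) * a^2"
  shows "b + sqrt (N * (X - b^2)) \<le> a + sqrt (N * (X - a^2))"
    and "b + sqrt (N * (X - b^2)) = a + sqrt (N * (X - a^2)) \<Longrightarrow> b = a"
proof -
  define Ta where "Ta = sqrt (N * (X - a^2))"
  define Tb where "Tb = sqrt (N * (X - b^2))"
  have a2b2: "a^2 \<le> b^2" using a0 ab by (simp add: power_mono)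
  have Ta0: "Ta \<ge> 0" and Tb0: "Tb \<ge> 0" unfolding Ta_def Tb_def using N bX a2b2 by simp_all
  have Ta2: "Ta^2 = N * (X - a^2)" and Tb2: "Tb^2 = N * (X - b^2)"
    unfolding Ta_def Tb_def using N bX a2b2 by simp_all
  have strict: "b + Tb < a + Ta" if lt: "a < b"
  proof -
    have "Tb^2 < (N * b)^2"
    proof -
      have "N * a^2 \<le> N * b^2" using a2b2 N by (intro mult_left_mono) auto
      then have "X - b^2 < N * b^2"
        using Xa power_strict_mono[OF lt a0, of 2] by (simp add: algebra_simps)
      then have "N * (X - b^2) < N * (N * b^2)" using N by simp
      then show ?thesis using Tb2 by (simp add: power2_eq_square algebra_simps)
    qed
    then have Tb_lt: "Tb < N * b" by (rule power2_less_imp_less) (use N a0 lt in auto)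
    have "N * (X - a^2) \<le> N * (N * a^2)" using N Xa by (intro mult_left_mono) (auto simp: algebra_simps)
    then have "Ta^2 \<le> (N * a)^2" using Ta2 by (simp add: power2_eq_square algebra_simps)
    then have Ta_le: "Ta \<le> N * a" by (rule power2_le_imp_le) (use N a0 in auto)
    have diff: "(Ta - Tb) * (Ta + Tb) = N * (b - a) * (b + a)"
      using Ta2 Tb2 by (simp add: algebra_simps power2_eq_square)
    have "Ta + Tb > 0"
    proof (rule ccontr)
      assume "\<not> Ta + Tb > 0"
      then have "Ta + Tb = 0" using Ta0 Tb0 by simp
      then have "N * (b - a) * (b + a) = 0" using diff by simp
      then show False using N lt a0 by simp
    qed
    moreover have "(b - a) * (Ta + Tb) < (b - a) * (N * (b + a))"
      using Ta_le Tb_lt lt by (intro mult_strict_left_mono) (auto simp: algebra_simps)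
    then have "(b - a) * (Ta + Tb) < (Ta - Tb) * (Ta + Tb)"
      unfolding diff by (simp add: algebra_simps)
    ultimately show ?thesis by (simp add: mult_less_cancel_right)
  qed
  show "b + sqrt (N * (X - b^2)) \<le> a + sqrt (N * (X - a^2))"
    using strict ab unfolding Ta_def Tb_def by (cases "a < b") auto
  show "b + sqrt (N * (X - b^2)) = a + sqrt (N * (X - a^2)) \<Longrightarrow> b = a"
    using strict ab unfolding Ta_def Tb_def by (cases "a < b") auto
qed

lemma sum_abs_peak_bound:
  fixes y :: "nat \<Rightarrow> real"
  assumes n: "n \<ge> 2" and i0: "i0 < n" and d: "0 < d" "d \<le> y i0"
    and X: "(\<Sum>i<n. (y i)^2) \<le> real n * d^2"
  shows "(\<Sum>i<n. \<bar>y i\<bar>) \<le> d + sqrt ((real n - 1) * ((\<Sum>i<n. (y i)^2) - d^2))"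
    and "(\<Sum>i<n. \<bar>y i\<bar>) = d + sqrt ((real n - 1) * ((\<Sum>i<n. (y i)^2) - d^2)) \<Longrightarrow>
         y i0 = d \<and> (\<forall>i<n. \<forall>j<n. i \<noteq> i0 \<longrightarrow> j \<noteq> i0 \<longrightarrow> \<bar>y i\<bar> = \<bar>y j\<bar>)"
proof -
  define R where "R = {..<n} - {i0}"
  define X where "X = (\<Sum>i<n. (y i)^2)"
  have split: "(\<Sum>i<n. g i) = g i0 + (\<Sum>i\<in>R. g i)" for g :: "nat \<Rightarrow> real"
    unfolding R_def using i0 by (simp add: sum.remove)
  have card_R: "real (card R) = real n - 1" unfolding R_def using i0 by (simp add: of_nat_diff)
  have rest: "(\<Sum>i\<in>R. (y i)^2) = X - (y i0)^2" unfolding X_def split[of "\<lambda>i. (y i)^2"] by simp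
  have "(\<Sum>i\<in>R. (y i)^2) \<ge> 0" by (intro sum_nonneg) auto
  then have peak: "(y i0)^2 \<le> X" using rest by simp
  have sum_abs: "(\<Sum>i<n. \<bar>y i\<bar>) = y i0 + (\<Sum>i\<in>R. \<bar>y i\<bar>)" using split d by simp
  have R: "finite R" unfolding R_def by simp
  have CS: "(\<Sum>i\<in>R. \<bar>y i\<bar>) \<le> sqrt ((real n - 1) * (X - (y i0)^2))"
    using sum_abs_cauchy_schwarz(1)[OF R, of y] unfolding card_R rest .
  have mono: "y i0 + sqrt ((real n - 1) * (X - (y i0)^2)) \<le> d + sqrt ((real n - 1) * (X - d^2))"
    "y i0 + sqrt ((real n - 1) * (X - (y i0)^2)) = d + sqrt ((real n - 1) * (X - d^2)) \<Longrightarrow> y i0 = d"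
    using plus_sqrt_deficit_antimono[of "real n - 1" d "y i0" X] n d peak X unfolding X_def by auto
  show "(\<Sum>i<n. \<bar>y i\<bar>) \<le> d + sqrt ((real n - 1) * ((\<Sum>i<n. (y i)^2) - d^2))"
    using sum_abs CS mono(1) unfolding X_def by linarith
  assume eq: "(\<Sum>i<n. \<bar>y i\<bar>) = d + sqrt ((real n - 1) * ((\<Sum>i<n. (y i)^2) - d^2))"
  then have "y i0 + sqrt ((real n - 1) * (X - (y i0)^2)) = d + sqrt ((real n - 1) * (X - d^2))"
    using sum_abs CS mono(1) unfolding X_def by linarith
  then have "y i0 = d" by (rule mono(2))
  moreover have "(\<Sum>i\<in>R. \<bar>y i\<bar>) = sqrt (real (card R) * (\<Sum>i\<in>R. (y i)^2))"
    using eq sum_abs CS mono(1) unfolding card_R rest X_def by linarith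
  then have "\<bar>y i\<bar> = \<bar>y j\<bar>" if "i < n" "j < n" "i \<noteq> i0" "j \<noteq> i0" for i j
    using sum_abs_cauchy_schwarz(2)[OF R] that unfolding R_def by blast
  ultimately show "y i0 = d \<and> (\<forall>i<n. \<forall>j<n. i \<noteq> i0 \<longrightarrow> j \<noteq> i0 \<longrightarrow> \<bar>y i\<bar> = \<bar>y j\<bar>)"
    by blast
qed

lemma sum_abs_lt_sqrt:
  fixes y :: "nat \<Rightarrow> real"
  assumes n: "n > 0" and d: "d > 0" and sum: "(\<Sum>i<n. y i) = 0" and lower: "\<forall>i<n. - d \<le> y i"
    and X: "real n * d^2 < (\<Sum>i<n. (y i)^2)"
  shows "(\<Sum>i<n. \<bar>y i\<bar>) < sqrt (real n * (\<Sum>i<n. (y i)^2))"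
proof -
  have "(\<Sum>i<n. \<bar>y i\<bar>) \<le> sqrt (real n * (\<Sum>i<n. (y i)^2))"
    using sum_abs_cauchy_schwarz(1)[of "{..<n}" y] by simp
  moreover have "(\<Sum>i<n. \<bar>y i\<bar>) \<noteq> sqrt (real n * (\<Sum>i<n. (y i)^2))"
  proof
    assume "(\<Sum>i<n. \<bar>y i\<bar>) = sqrt (real n * (\<Sum>i<n. (y i)^2))"
    then have same_abs: "\<bar>y i\<bar> = \<bar>y 0\<bar>" if "i < n" for i
      using sum_abs_cauchy_schwarz(2)[of "{..<n}" y i 0] that n by simp
    define t where "t = \<bar>y 0\<bar>"
    have "(y i)^2 = t^2" if "i < n" for i
      using same_abs[OF that] unfolding t_def by (metis power2_abs)
    then have "(\<Sum>i<n. (y i)^2) = real n * t^2" by simp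
    then have "d^2 < t^2" using X n by simp
    then have "d < t" by (rule power2_less_imp_less) (simp add: t_def)
    then have "y i = t" if "i < n" for i using same_abs[OF that] lower that unfolding t_def by force
    then have "(\<Sum>i<n. y i) = real n * t" by simp
    then show False using sum \<open>d < t\<close> d n by simp
  qed
  ultimately show ?thesis by simp
qed

lemma sqrt_mean_plus_sqrt_rest:
  assumes "n > 0"
  shows "sqrt (X / real n) + sqrt ((real n - 1) * (X - X / real n)) = sqrt (real n * X)"
proof -
  have "(real n - 1) * (X - X / real n) = (real n - 1)^2 * (X / real n)"
    using assms by (simp add: power2_eq_square field_simps)
  then have "sqrt ((real n - 1) * (X - X / real n)) = sqrt ((real n - 1)^2) * sqrt (X / real n)"
    by (simp only: real_sqrt_mult)
  then have "sqrt ((real n - 1) * (X - X / real n)) = (real n - 1) * sqrt (X / real n)"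
    using assms by simp
  moreover have "real n * X = (real n)^2 * (X / real n)" using assms by (simp add: power2_eq_square)
  then have "sqrt (real n * X) = sqrt ((real n)^2) * sqrt (X / real n)" by (simp only: real_sqrt_mult)
  then have "sqrt (real n * X) = real n * sqrt (X / real n)" by simp
  ultimately show ?thesis by (simp add: algebra_simps)
qed

lemma sum_abs_two_values:
  fixes y :: "nat \<Rightarrow> real"
  assumes two_valued: "\<forall>i<n. \<bar>y i\<bar> = a \<or> \<bar>y i\<bar> = b" and ab: "0 \<le> a" "0 \<le> b"
    and sum_sq: "(\<Sum>i<n. (y i)^2) = a^2 + (real n - 1) * b^2"
  shows "(\<Sum>i<n. \<bar>y i\<bar>) = a + (real n - 1) * b"
proof -
  define K where "K = {i. i < n \<and> \<bar>y i\<bar> = a}"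
  define k where "k = real (card K)"
  have K: "K \<subseteq> {..<n}" "finite K" unfolding K_def by auto
  have other: "\<bar>y i\<bar> = b" if "i \<in> {..<n} - K" for i using two_valued that unfolding K_def by auto
  have "card K \<le> n" using card_mono[OF _ K(1)] by simp
  then have card_other: "real (card ({..<n} - K)) = real n - k"
    unfolding k_def using K by (simp add: card_Diff_subset of_nat_diff)
  have split: "(\<Sum>i<n. g i) = (\<Sum>i\<in>K. g i) + (\<Sum>i\<in>{..<n} - K. g i)" for g :: "nat \<Rightarrow> real"
    using K by (metis finite_lessThan sum.subset_diff add.commute)
  have "(\<Sum>i\<in>{..<n} - K. \<bar>y i\<bar>) = (\<Sum>i\<in>{..<n} - K. b)" using other by (rule sum.cong[OF refl])
  then have sum_abs: "(\<Sum>i<n. \<bar>y i\<bar>) = k * a + (real n - k) * b"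
    using card_other unfolding split[of "\<lambda>i. \<bar>y i\<bar>"] k_def by (simp add: K_def)
  have "(y i)^2 = a^2" if "i \<in> K" for i using that unfolding K_def by (metis (mono_tags) mem_Collect_eq power2_abs)
  moreover have "(y i)^2 = b^2" if "i \<in> {..<n} - K" for i using other[OF that] by (metis power2_abs)
  ultimately have "(\<Sum>i<n. (y i)^2) = k * a^2 + (real n - k) * b^2"
    using card_other unfolding split[of "\<lambda>i. (y i)^2"] k_def by simp
  then have "(k - 1) * (a^2 - b^2) = 0" using sum_sq by (simp add: algebra_simps)
  then have "k = 1 \<or> a = b" using ab by (auto simp: power2_eq_iff_nonneg)
  then show ?thesis using sum_abs by (auto simp: algebra_simps)
qed

section \<open>The signless Laplacian and its spectrum\<close>

definition signless_laplacian_fmat :: "nat \<Rightarrow> (nat \<Rightarrow> nat \<Rightarrow> bool) \<Rightarrow> fmat" where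
  "signless_laplacian_fmat n E = (\<lambda>i j. if i < n \<and> j < n then
     (if i = j then real (degree n E i) else 0) + (if E i j then 1 else 0) else 0)"

lemma simple_graphD:
  assumes "simple_graph n E" "E i j"
  shows "i < n" "j < n" "i \<noteq> j" "E j i"
  using assms unfolding simple_graph_def by auto

lemma fmat_on_signless_laplacian: "fmat_on n (signless_laplacian_fmat n E)"
  unfolding fmat_on_def signless_laplacian_fmat_def by auto

lemma signless_laplacian_fmat_symmetric:
  "simple_graph n E \<Longrightarrow> fmat_transpose (signless_laplacian_fmat n E) = signless_laplacian_fmat n E"
  unfolding fmat_transpose_def signless_laplacian_fmat_def by (intro ext) (auto dest: simple_graphD)

lemma mat_of_signless_laplacian_fmat: "mat_of_fmat n (signless_laplacian_fmat n E) = signless_laplacian n E"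
  by (rule eq_matI) (auto simp: mat_of_fmat_def signless_laplacian_fmat_def signless_laplacian_def)

lemma card_lessThan_filter: "real (card {u. u < (n::nat) \<and> P u}) = (\<Sum>u<n. if P u then 1 else 0)"
  using sum.inter_filter[of "{..<n}" "\<lambda>_. 1 :: real" P] by simp

lemma degree_as_sum: "real (degree n E v) = (\<Sum>u<n. if E v u then 1 else 0)"
  unfolding degree_def by (rule card_lessThan_filter)

lemma common_neighbours_as_sum:
  "real (common_neighbours n E u v) = (\<Sum>w<n. (if E u w then 1 else 0) * (if E v w then 1 else 0))"
  unfolding common_neighbours_def card_lessThan_filter[of n "\<lambda>w. E u w \<and> E v w"]
  by (intro sum.cong) auto

lemma degree_le:
  assumes "simple_graph n E" "v < n"
  shows "degree n E v \<le> n - 1"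
proof -
  have "{u. u < n \<and> E v u} \<subseteq> {..<n} - {v}" by (auto dest: simple_graphD[OF assms(1)])
  then have "card {u. u < n \<and> E v u} \<le> card ({..<n} - {v})" by (intro card_mono) auto
  then show ?thesis unfolding degree_def using assms(2) by simp
qed

lemma sum_degree_eq_twice_edges:
  assumes G: "simple_graph n E"
  shows "(\<Sum>v<n. degree n E v) = 2 * num_edges n E"
proof -
  define Pl where "Pl = {(i,j). i < n \<and> j < n \<and> E i j \<and> i < j}"
  define Pg where "Pg = {(i,j). i < n \<and> j < n \<and> E i j \<and> j < i}"
  have "(\<Sum>v<n. degree n E v) = card (SIGMA i:{..<n}. {j. j < n \<and> E i j})"
    unfolding degree_def by (subst card_SigmaI) auto
  also have "(SIGMA i:{..<n}. {j. j < n \<and> E i j}) = Pl \<union> Pg"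
    unfolding Pl_def Pg_def by (auto dest: simple_graphD[OF G] simp: linorder_neq_iff)
  also have "card (Pl \<union> Pg) = card Pl + card Pg"
  proof (rule card_Un_disjoint)
    show "finite Pl" "finite Pg"
      by (rule finite_subset[of _ "{..<n} \<times> {..<n}"], auto simp: Pl_def Pg_def)+
  qed (auto simp: Pl_def Pg_def)
  also have "card Pg = card Pl"
    by (rule bij_betw_same_card[of prod.swap])
       (auto simp: bij_betw_def Pl_def Pg_def image_def dest: simple_graphD[OF G])
  also have "card Pl = num_edges n E"
    unfolding num_edges_def
  proof (rule bij_betw_same_card[of "\<lambda>(i,j). {i,j}"], rule bij_betwI')
    fix e assume "e \<in> edges n E"
    then obtain i j where e: "e = {i,j}" "i < n" "j < n" "E i j" unfolding edges_def by auto
    then have "i < j \<or> j < i" using simple_graphD(3)[OF G e(4)] by auto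
    then show "\<exists>x\<in>Pl. e = (\<lambda>(i,j). {i,j}) x"
      using e simple_graphD(4)[OF G e(4)] unfolding Pl_def by (auto intro!: bexI[of _ "(i,j)"] bexI[of _ "(j,i)"])
  qed (auto simp: Pl_def edges_def doubleton_eq_iff)
  finally show ?thesis by simp
qed

lemma signless_laplacian_row_sum:
  assumes "j < n"
  shows "(\<Sum>k<n. signless_laplacian_fmat n E j k) = 2 * real (degree n E j)"
proof -
  have "(\<Sum>k<n. signless_laplacian_fmat n E j k)
      = (\<Sum>k<n. (if k = j then real (degree n E j) else 0) + (if E j k then 1 else 0))"
    using assms unfolding signless_laplacian_fmat_def by (intro sum.cong) auto
  then show ?thesis using assms by (simp add: sum.distrib degree_as_sum)
qed

lemma signless_laplacian_total_sum:
  assumes "simple_graph n E"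
  shows "(\<Sum>j<n. \<Sum>k<n. signless_laplacian_fmat n E j k) = 4 * real (num_edges n E)"
proof -
  have "(\<Sum>j<n. \<Sum>k<n. signless_laplacian_fmat n E j k) = 2 * real (\<Sum>j<n. degree n E j)"
    by (simp add: signless_laplacian_row_sum sum_distrib_left)
  then show ?thesis unfolding sum_degree_eq_twice_edges[OF assms] by simp
qed

lemma signless_laplacian_trace:
  assumes "simple_graph n E"
  shows "fmat_trace n (signless_laplacian_fmat n E) = 2 * real (num_edges n E)"
proof -
  have "fmat_trace n (signless_laplacian_fmat n E) = (\<Sum>j<n. real (degree n E j))"
    unfolding fmat_trace_def signless_laplacian_fmat_def
    by (intro sum.cong) (auto dest: simple_graphD[OF assms])
  also have "\<dots> = 2 * real (num_edges n E)"
    using arg_cong[OF sum_degree_eq_twice_edges[OF assms], of real] by simp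
  finally show ?thesis .
qed

lemma signless_laplacian_sum_squares:
  assumes "simple_graph n E"
  shows "(\<Sum>j<n. \<Sum>k<n. (signless_laplacian_fmat n E j k)^2) = real (zagreb1 n E) + 2 * real (num_edges n E)"
proof -
  have "(\<Sum>j<n. \<Sum>k<n. (signless_laplacian_fmat n E j k)^2) =
        (\<Sum>j<n. \<Sum>k<n. (if k = j then (real (degree n E j))^2 else 0) + (if E j k then 1 else 0))"
    unfolding signless_laplacian_fmat_def by (intro sum.cong) (auto dest: simple_graphD[OF assms])
  also have "\<dots> = real (zagreb1 n E) + real (\<Sum>j<n. degree n E j)"
    unfolding zagreb1_def by (simp add: sum.distrib degree_as_sum)
  finally show ?thesis unfolding sum_degree_eq_twice_edges[OF assms] by simp
qed

text \<open>2 x^T Q x is the sum of (x j + x k)^2 over the ordered pairs (j, k) with E j k.\<close>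
lemma signless_laplacian_quadratic_form_nonneg:
  assumes G: "simple_graph n E"
  shows "(\<Sum>j<n. \<Sum>k<n. x j * signless_laplacian_fmat n E j k * x k) \<ge> 0"
proof -
  define e where "e j k = (if E j k then 1 else (0::real))" for j k
  define q where "q = (\<Sum>j<n. \<Sum>k<n. x j * signless_laplacian_fmat n E j k * x k)"
  have q1: "q = (\<Sum>j<n. \<Sum>k<n. e j k * (x j)^2 + e j k * x j * x k)"
    unfolding q_def signless_laplacian_fmat_def e_def
    by (simp add: sum.distrib algebra_simps power2_eq_square degree_as_sum sum_distrib_left
        sum_distrib_right if_distrib[of "\<lambda>y. y * _"] if_distrib[of "\<lambda>y. _ * y"] cong: if_cong)
  have "(\<Sum>j<n. \<Sum>k<n. e j k * (x j)^2) = (\<Sum>k<n. \<Sum>j<n. e j k * (x j)^2)"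
    by (rule sum.swap)
  also have "\<dots> = (\<Sum>j<n. \<Sum>k<n. e j k * (x k)^2)"
    unfolding e_def by (intro sum.cong) (auto dest: simple_graphD[OF G])
  finally have q2: "q = (\<Sum>j<n. \<Sum>k<n. e j k * (x k)^2 + e j k * x j * x k)"
    unfolding q1 by (simp add: sum.distrib)
  have "2 * q = (\<Sum>j<n. \<Sum>k<n. (e j k * (x j)^2 + e j k * x j * x k) + (e j k * (x k)^2 + e j k * x j * x k))"
    using q1 q2 by (simp add: sum.distrib sum_distrib_left mult_ac)
  also have "\<dots> = (\<Sum>j<n. \<Sum>k<n. e j k * (x j + x k)^2)"
    by (intro sum.cong) (simp_all add: power2_eq_square algebra_simps)
  finally have "2 * q = \<dots>" .
  moreover have "(\<Sum>j<n. \<Sum>k<n. e j k * (x j + x k)^2) \<ge> 0"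
    by (intro sum_nonneg) (auto simp: e_def)
  ultimately show ?thesis unfolding q_def by simp
qed

definition adjacency_fmat :: "nat \<Rightarrow> (nat \<Rightarrow> nat \<Rightarrow> bool) \<Rightarrow> fmat" where
  "adjacency_fmat n E = (\<lambda>i j. if i < n \<and> j < n \<and> E i j then 1 else 0)"

lemma adjacency_fmat_row_sum: "j < n \<Longrightarrow> (\<Sum>k<n. adjacency_fmat n E j k) = real (degree n E j)"
  unfolding adjacency_fmat_def degree_as_sum by (intro sum.cong) auto

lemma adjacency_fmat_symmetric: "simple_graph n E \<Longrightarrow> adjacency_fmat n E j k = adjacency_fmat n E k j"
  unfolding adjacency_fmat_def by (auto dest: simple_graphD)

lemma adjacency_fmat_square_entry:
  assumes G: "simple_graph n E" and jk: "j < n" "k < n"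
  shows "fmat_mult n (adjacency_fmat n E) (adjacency_fmat n E) j k
      = (if j = k then real (degree n E j) else real (common_neighbours n E j k))"
proof -
  have "fmat_mult n (adjacency_fmat n E) (adjacency_fmat n E) j k
      = (\<Sum>l<n. (if E j l then 1 else 0) * (if E k l then 1 else 0))"
    using jk unfolding fmat_mult_entry[OF jk] adjacency_fmat_def
    by (intro sum.cong) (auto dest: simple_graphD[OF G])
  then show ?thesis by (simp add: common_neighbours_as_sum degree_as_sum if_distrib[of "\<lambda>x. x * _"] cong: if_cong)
qed

lemma regular_adjacency_square_row_sum:
  assumes reg: "\<forall>j<n. degree n E j = r" and j: "j < n"
  shows "(\<Sum>k<n. fmat_mult n (adjacency_fmat n E) (adjacency_fmat n E) j k) = real r * real r"
proof -
  have "(\<Sum>k<n. fmat_mult n (adjacency_fmat n E) (adjacency_fmat n E) j k)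
      = (\<Sum>k<n. \<Sum>l<n. adjacency_fmat n E j l * adjacency_fmat n E l k)"
    using j by (simp add: fmat_mult_entry)
  also have "\<dots> = (\<Sum>l<n. adjacency_fmat n E j l * (\<Sum>k<n. adjacency_fmat n E l k))"
    by (subst sum.swap) (simp add: sum_distrib_left)
  also have "\<dots> = real r * real r"
    using reg j by (simp add: adjacency_fmat_row_sum sum_distrib_right[symmetric])
  finally show ?thesis .
qed

lemma sum_mset_map_upt: "(\<Sum>q\<in>#mset (map \<mu> [0..<n]). g q) = (\<Sum>i<n. g (\<mu> i))"
  by (induction n) (simp_all add: ac_simps)

locale signless_spectrum =
  fixes n :: nat and E :: "nat \<Rightarrow> nat \<Rightarrow> bool" and U :: fmat and \<mu> :: "nat \<Rightarrow> real"
  assumes graph: "simple_graph n E"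
    and orthogonal: "orthogonal_fmat n U"
    and decomposition: "signless_laplacian_fmat n E = fmat_conj_diag n U \<mu>"

lemma signless_laplacian_spectral_decomposition:
  assumes "simple_graph n E"
  obtains U \<mu> where "signless_spectrum n E U \<mu>"
    "QE n E = (\<Sum>i<n. \<bar>\<mu> i - 2 * real (num_edges n E) / real n\<bar>)"
proof -
  obtain U \<mu> where U: "orthogonal_fmat n U"
    and eigen: "fmat_mult n (signless_laplacian_fmat n E) U = fmat_mult n U (fmat_diag n \<mu>)"
    using symmetric_fmat_diagonalizable[OF fmat_on_signless_laplacian
        signless_laplacian_fmat_symmetric[OF assms]] by blast
  have Q: "signless_laplacian_fmat n E = fmat_conj_diag n U \<mu>"
    by (rule fmat_eq_conj_diag[OF fmat_on_signless_laplacian U eigen])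
  have eigenvalues: "Q_eigenvalues n E = mset (map \<mu> [0..<n])"
    unfolding Q_eigenvalues_def mat_of_signless_laplacian_fmat[symmetric] Q
    by (rule proots_char_poly_conj_diag[OF U])
  have "QE n E = (\<Sum>i<n. \<bar>\<mu> i - 2 * real (num_edges n E) / real n\<bar>)"
    unfolding QE_def eigenvalues sum_mset_map_upt ..
  moreover have "signless_spectrum n E U \<mu>"
    using assms U Q by (simp add: signless_spectrum_def)
  ultimately show thesis using that by blast
qed

context signless_spectrum
begin

lemma eigenvalues_sum: "(\<Sum>i<n. \<mu> i) = 2 * real (num_edges n E)"
  using signless_laplacian_trace[OF graph] fmat_trace_conj_diag[OF orthogonal] decomposition by simp

lemma eigenvalues_sum_squares:
  "(\<Sum>i<n. (\<mu> i)^2) = real (zagreb1 n E) + 2 * real (num_edges n E)"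
  using signless_laplacian_sum_squares[OF graph] fmat_conj_diag_sum_squares[OF orthogonal] decomposition by simp

lemma eigenvalue_nonneg: "i < n \<Longrightarrow> \<mu> i \<ge> 0"
  using signless_laplacian_quadratic_form_nonneg[OF graph, of "\<lambda>j. U j i"] fmat_conj_diag_rayleigh[OF orthogonal]
  unfolding decomposition by simp

text \<open>Expanding the all-ones vector in the eigenbasis: its coefficients c i satisfy
  \<Sum> c i^2 = n and \<Sum> \<mu> i c i^2 = 1^T Q 1 = 4m, so the largest eigenvalue is at least 4m/n;
  in case of equality every c i with \<mu> i below the maximum vanishes, so the all-ones vector is
  an eigenvector and all row sums 2 d(j) of Q agree.\<close>
lemma largest_eigenvalue_bound:
  assumes n: "n > 0"
  obtains i0 where "i0 < n" "\<forall>i<n. \<mu> i \<le> \<mu> i0" "4 * real (num_edges n E) / real n \<le> \<mu> i0"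
    "\<mu> i0 = 4 * real (num_edges n E) / real n \<Longrightarrow> \<forall>j<n. real (degree n E j) = 2 * real (num_edges n E) / real n"
proof -
  define c where "c i = (\<Sum>k<n. U k i)" for i
  define M where "M = Max (\<mu> ` {..<n})"
  have "M \<in> \<mu> ` {..<n}" unfolding M_def using n by (intro Max_in) auto
  then obtain i0 where i0: "i0 < n" "\<mu> i0 = M" by auto
  have M_ge: "\<mu> i \<le> M" if "i < n" for i unfolding M_def using that by (intro Max_ge) auto
  have c_norm: "(\<Sum>i<n. (c i)^2) = real n"
    using fmat_conj_diag_total_sum[of n U "\<lambda>_. 1"] unfolding fmat_conj_diag_one[OF orthogonal] c_def
    by (simp add: fmat_one_def)
  have c_row: "(\<Sum>i<n. U j i * c i) = 1" if "j < n" for j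
    using fmat_conj_diag_row_sum[OF that, of U "\<lambda>_. 1"] that unfolding fmat_conj_diag_one[OF orthogonal] c_def
    by (simp add: fmat_one_def)
  have "(\<Sum>i<n. \<mu> i * (c i)^2) = 4 * real (num_edges n E)"
    using signless_laplacian_total_sum[OF graph] fmat_conj_diag_total_sum[of n U \<mu>] unfolding decomposition c_def by simp
  then have gap: "(\<Sum>i<n. (M - \<mu> i) * (c i)^2) = M * real n - 4 * real (num_edges n E)"
    using c_norm by (simp add: left_diff_distrib sum_subtractf sum_distrib_left[symmetric])
  moreover have gap_nonneg: "(\<Sum>i<n. (M - \<mu> i) * (c i)^2) \<ge> 0"
    using M_ge by (intro sum_nonneg) auto
  ultimately have "4 * real (num_edges n E) / real n \<le> M" using n by (simp add: field_simps)
  moreover have "\<forall>j<n. real (degree n E j) = 2 * real (num_edges n E) / real n"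
    if M_eq: "M = 4 * real (num_edges n E) / real n"
  proof (intro allI impI)
    fix j assume j: "j < n"
    have zero: "(M - \<mu> i) * (c i)^2 = 0" if "i < n" for i
      using gap M_eq n sum_nonneg_eq_0_iff[of "{..<n}" "\<lambda>i. (M - \<mu> i) * (c i)^2"] M_ge that by auto
    then have "(\<Sum>i<n. \<mu> i * U j i * c i) = (\<Sum>i<n. M * (U j i * c i))"
    proof (intro sum.cong refl)
      fix i assume "i \<in> {..<n}"
      then have "\<mu> i = M \<or> c i = 0" using zero by fastforce
      then show "\<mu> i * U j i * c i = M * (U j i * c i)" by auto
    qed
    also have "\<dots> = M" using c_row[OF j] by (simp add: sum_distrib_left[symmetric])
    finally have "(\<Sum>k<n. signless_laplacian_fmat n E j k) = M"
      unfolding decomposition fmat_conj_diag_row_sum[OF j] c_def[symmetric] .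
    then show "real (degree n E j) = 2 * real (num_edges n E) / real n"
      using signless_laplacian_row_sum[OF j] M_eq by simp
  qed
  ultimately show thesis using that i0 M_ge by simp
qed

lemma regular_adjacency_conj_diag:
  assumes reg: "\<forall>j<n. degree n E j = r"
  shows "adjacency_fmat n E = fmat_conj_diag n U (\<lambda>i. \<mu> i - real r)"
proof (intro ext)
  fix j k
  show "adjacency_fmat n E j k = fmat_conj_diag n U (\<lambda>i. \<mu> i - real r) j k"
  proof (cases "j < n \<and> k < n")
    case True
    then show ?thesis
      using reg by (auto simp: fmat_conj_diag_shift[OF orthogonal] decomposition[symmetric] signless_laplacian_fmat_def
          adjacency_fmat_def)
  next
    case False
    then show ?thesis
      using fmat_on_mult unfolding fmat_conj_diag_def fmat_on_def adjacency_fmat_def by auto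
  qed
qed

text \<open>A^2 = (r - a) I + a J and A 1 = r 1: an eigenvector of A orthogonal to 1 has
  (\<mu> - r)^2 = r - a, and one not orthogonal to 1 has \<mu> - r = r.\<close>
lemma strongly_regular_eigenvalues:
  assumes S: "is_S n E r" and i: "i < n"
  shows "(\<mu> i - real r)^2 = (real r)^2 \<or>
         (\<mu> i - real r)^2 = real r - real r * (real r - 1) / (real n - 1)"
proof -
  define a where "a = real r * (real r - 1) / (real n - 1)"
  define A where "A = adjacency_fmat n E"
  define \<sigma> where "\<sigma> = (\<Sum>k<n. U k i)"
  have reg: "\<forall>j<n. degree n E j = r" using S unfolding is_S_def strongly_regular_def by auto
  have A: "A = fmat_conj_diag n U (\<lambda>i. \<mu> i - real r)"
    unfolding A_def by (rule regular_adjacency_conj_diag[OF reg])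
  have A2: "fmat_mult n A A = fmat_conj_diag n U (\<lambda>i. (\<mu> i - real r) * (\<mu> i - real r))"
    unfolding A by (rule fmat_conj_diag_mult[OF orthogonal])
  have A2_entry: "fmat_mult n A A j k = (if j = k then real r - a else 0) + a" if "j < n" "k < n" for j k
    using S that adjacency_fmat_square_entry[OF graph that] unfolding A_def is_S_def strongly_regular_def a_def
    by (cases "E j k") auto
  have "(\<mu> i - real r) * \<sigma> = (\<Sum>j<n. \<Sum>k<n. A j k * U k i)"
    using fmat_conj_diag_eigen_column[OF orthogonal i] unfolding A \<sigma>_def by (simp add: sum_distrib_left)
  also have "\<dots> = (\<Sum>k<n. (\<Sum>j<n. A k j) * U k i)"
    by (subst sum.swap) (simp add: sum_distrib_right adjacency_fmat_symmetric[OF graph] A_def)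
  also have "\<dots> = real r * \<sigma>"
    unfolding \<sigma>_def A_def by (simp add: adjacency_fmat_row_sum reg sum_distrib_left)
  finally have "(\<mu> i - 2 * real r) * \<sigma> = 0" by (simp add: algebra_simps)
  moreover have "(\<mu> i - real r)^2 * U j i = (real r - a) * U j i + a * \<sigma>" if j: "j < n" for j
  proof -
    have "(\<mu> i - real r)^2 * U j i = (\<Sum>k<n. fmat_mult n A A j k * U k i)"
      using fmat_conj_diag_eigen_column[OF orthogonal i j] unfolding A2 by (simp add: power2_eq_square)
    also have "\<dots> = (\<Sum>k<n. (if k = j then (real r - a) * U k i else 0) + a * U k i)"
      using j by (intro sum.cong) (auto simp: A2_entry algebra_simps)
    finally show ?thesis using j unfolding \<sigma>_def by (simp add: sum.distrib sum_distrib_left)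
  qed
  moreover obtain j where "j < n" "U j i \<noteq> 0"
    using orthogonal_fmat_columns[OF orthogonal i i] by (metis (no_types, lifting) mult_zero_left sum.neutral zero_neq_one lessThan_iff)
  ultimately show ?thesis unfolding a_def by (cases "\<sigma> = 0") (auto simp: power2_eq_square)
qed

text \<open>A^2 - s^2 I has eigenvalues vanishing except at i0, so its entries have sum n c and
  sum of squares c^2 with c = r^2 - s^2, which forces all of them to equal c/n.\<close>
lemma regular_imp_strongly_regular:
  assumes n: "n \<ge> 2" and reg: "\<forall>j<n. degree n E j = r"
    and i0: "i0 < n" "\<mu> i0 = 2 * real r"
    and others: "\<forall>i<n. i \<noteq> i0 \<longrightarrow> \<bar>\<mu> i - real r\<bar> = s"
  shows "is_S n E r"
proof -
  define A where "A = adjacency_fmat n E"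
  define f where "f i = (\<mu> i - real r) * (\<mu> i - real r) - s^2" for i
  define c where "c = (real r)^2 - s^2"
  define M where "M = fmat_conj_diag n U f"
  have A2: "fmat_mult n A A = fmat_conj_diag n U (\<lambda>i. (\<mu> i - real r) * (\<mu> i - real r))"
    unfolding A_def regular_adjacency_conj_diag[OF reg] by (rule fmat_conj_diag_mult[OF orthogonal])
  have M: "M j k = fmat_mult n A A j k - (if j = k then s^2 else 0)" if "j < n" "k < n" for j k
    unfolding M_def f_def A2 using fmat_conj_diag_shift[OF orthogonal that] .
  have "(\<mu> i - real r) * (\<mu> i - real r) = s^2" if "i < n" "i \<noteq> i0" for i
    using others that by (metis abs_mult_self_eq power2_eq_square)
  then have "f i = (if i = i0 then c else 0)" if "i < n" for i
    using that i0 unfolding f_def c_def by (auto simp: power2_eq_square)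
  then have "(\<Sum>i<n. (f i)^2) = c^2" using i0 by (simp add: if_distrib[of "\<lambda>x. x^2"] cong: if_cong)
  then have sum_sq: "(\<Sum>j<n. \<Sum>k<n. (M j k)^2) = c^2"
    unfolding M_def fmat_conj_diag_sum_squares[OF orthogonal] .
  have "(\<Sum>k<n. M j k) = real r * real r - s^2" if "j < n" for j
  proof -
    have "(\<Sum>k<n. M j k) = (\<Sum>k<n. fmat_mult n A A j k - (if j = k then s^2 else 0))"
      using that by (intro sum.cong) (auto simp: M)
    then show ?thesis using that regular_adjacency_square_row_sum[OF reg that]
      by (simp add: sum_subtractf A_def)
  qed
  then have sum: "(\<Sum>j<n. \<Sum>k<n. M j k) = real n * c" unfolding c_def by (simp add: power2_eq_square)
  define t where "t = c / real n"
  have M_const: "M j k = t" if "j < n" "k < n" for j k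
    unfolding t_def using n sum sum_sq that by (intro sum_sum_const_of_sum_squares) auto
  have common: "real (common_neighbours n E j k) = t" if "j < n" "k < n" "j \<noteq> k" for j k
    using M_const[OF that(1,2)] M[OF that(1,2)] adjacency_fmat_square_entry[OF graph that(1,2)] that(3)
    unfolding A_def by simp
  have "real r - s^2 = t"
    using M_const[OF i0(1) i0(1)] M[OF i0(1) i0(1)] adjacency_fmat_square_entry[OF graph i0(1) i0(1)] reg i0
    unfolding A_def by simp
  then have "t * (real n - 1) = real r * (real r - 1)"
    using n unfolding t_def c_def by (simp add: field_simps power2_eq_square)
  then have "t = real r * (real r - 1) / (real n - 1)" using n by (simp add: field_simps)
  then show ?thesis using reg common unfolding is_S_def strongly_regular_def by auto
qed

lemma centred_sum:
  assumes "n > 0"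
  shows "(\<Sum>i<n. \<mu> i - 2 * real (num_edges n E) / real n) = 0"
  using assms eigenvalues_sum by (simp add: sum_subtractf)

lemma centred_sum_squares:
  assumes "n > 0"
  shows "(\<Sum>i<n. (\<mu> i - 2 * real (num_edges n E) / real n)^2)
       = 2 * real (num_edges n E) + real (zagreb1 n E) - 4 * real (num_edges n E)^2 / real n"
proof -
  define d where "d = 2 * real (num_edges n E) / real n"
  have "(\<Sum>i<n. (\<mu> i - d)^2) = (\<Sum>i<n. (\<mu> i)^2) - 2 * d * (\<Sum>i<n. \<mu> i) + real n * d^2"
    by (simp add: power2_diff sum.distrib sum_subtractf sum_distrib_left mult_ac)
  then show ?thesis
    using assms unfolding eigenvalues_sum eigenvalues_sum_squares d_def
    by (simp add: power2_eq_square field_simps)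
qed

lemma strongly_regular_deviation:
  assumes n: "n \<ge> 2" and S: "is_S n E r"
  shows "(\<Sum>i<n. \<bar>\<mu> i - 2 * real (num_edges n E) / real n\<bar>)
       = 2 * real (num_edges n E) / real n + sqrt ((real n - 1) *
           ((2 * real (num_edges n E) + real (zagreb1 n E) - 4 * real (num_edges n E)^2 / real n)
            - (2 * real (num_edges n E) / real n)^2))"
proof -
  define t where "t = real r - real r * (real r - 1) / (real n - 1)"
  define s where "s = sqrt t"
  have reg: "\<forall>j<n. degree n E j = r" using S unfolding is_S_def strongly_regular_def by auto
  have m: "2 * real (num_edges n E) = real n * real r"
    using arg_cong[OF sum_degree_eq_twice_edges[OF graph], of real] reg by simp
  then have d: "2 * real (num_edges n E) / real n = real r" using n by (simp add: field_simps)
  have "real r \<le> real n - 1" using degree_le[OF graph, of 0] reg n by (simp add: of_nat_diff)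
  then have "real n * real r - (real r)^2 \<ge> 0" by (simp add: power2_eq_square mult_right_mono)
  moreover have t: "(real n - 1) * t = real n * real r - (real r)^2"
    using n unfolding t_def by (simp add: field_simps power2_eq_square)
  ultimately have "0 \<le> (real n - 1) * t" by simp
  then have "t \<ge> 0" using n by (simp add: zero_le_mult_iff)
  then have s0: "s \<ge> 0" and s2: "(real n - 1) * s^2 = real n * real r - (real r)^2"
    unfolding s_def using t by simp_all
  have "real (zagreb1 n E) = real n * (real r)^2" unfolding zagreb1_def using reg by simp
  moreover have "4 * real (num_edges n E)^2 = (real n * real r)^2"
    using arg_cong[OF m, of "\<lambda>x. x^2"] by (simp add: power_mult_distrib)
  ultimately have X: "2 * real (num_edges n E) + real (zagreb1 n E) - 4 * real (num_edges n E)^2 / real n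
      = real n * real r"
    using m n by (simp add: power2_eq_square field_simps)
  have "\<bar>\<mu> i - real r\<bar> = real r \<or> \<bar>\<mu> i - real r\<bar> = s" if "i < n" for i
    using strongly_regular_eigenvalues[OF S that] unfolding s_def t_def
    by (metis abs_of_nat power2_abs real_sqrt_abs)
  moreover have "(\<Sum>i<n. (\<mu> i - real r)^2) = (real r)^2 + (real n - 1) * s^2"
    using centred_sum_squares n unfolding d X s2 by simp
  ultimately have "(\<Sum>i<n. \<bar>\<mu> i - real r\<bar>) = real r + (real n - 1) * s"
    using s0 by (intro sum_abs_two_values) auto
  moreover have "sqrt ((real n - 1) * (real n * real r - (real r)^2)) = (real n - 1) * s"
    using s0 s2 n by (simp add: real_sqrt_mult power2_eq_square[symmetric] flip: s2)
  ultimately show ?thesis unfolding d X by (simp add: power2_eq_square)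
qed

end

section \<open>The extremal graphs\<close>

lemma is_S_graph_iso:
  assumes iso: "graph_iso n E E'" and S: "is_S n E' r"
  shows "is_S n E r"
proof -
  from iso obtain f where bij: "bij_betw f {..<n} {..<n}"
    and f_edges: "\<forall>i<n. \<forall>j<n. E i j \<longleftrightarrow> E' (f i) (f j)"
    unfolding graph_iso_def by blast
  have f_less: "f u < n" if "u < n" for u using bij that by (auto simp: bij_betw_def)
  have f_inj: "f u \<noteq> f v" if "u < n" "v < n" "u \<noteq> v" for u v
    using bij that by (auto simp: bij_betw_def inj_on_def)
  have card_pull: "card {u. u < n \<and> P (f u)} = card {w. w < n \<and> P w}" for P
  proof -
    have "f ` {u. u < n \<and> P (f u)} = {w. w < n \<and> P w}"
      using bij by (auto simp: bij_betw_def f_less)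
    moreover have "inj_on f {u. u < n \<and> P (f u)}"
      using bij by (auto simp: bij_betw_def intro: inj_on_subset)
    ultimately show ?thesis by (metis card_image)
  qed
  have "degree n E v = degree n E' (f v)" if "v < n" for v
  proof -
    have "{u. u < n \<and> E v u} = {u. u < n \<and> E' (f v) (f u)}" using f_edges that by auto
    then show ?thesis unfolding degree_def using card_pull[of "E' (f v)"] by simp
  qed
  moreover have "common_neighbours n E u v = common_neighbours n E' (f u) (f v)" if "u < n" "v < n" for u v
  proof -
    have "{w. w < n \<and> E u w \<and> E v w} = {w. w < n \<and> E' (f u) (f w) \<and> E' (f v) (f w)}"
      using f_edges that by auto
    then show ?thesis
      unfolding common_neighbours_def using card_pull[of "\<lambda>x. E' (f u) x \<and> E' (f v) x"] by simp
  qed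
  ultimately show ?thesis
    using S f_edges f_less f_inj unfolding is_S_def strongly_regular_def by metis
qed

lemma is_S_complete_graph:
  assumes "n \<ge> 2"
  shows "is_S n (complete_graph n) (n - 1)"
proof -
  have "{u. u < n \<and> complete_graph n v u} = {..<n} - {v}" if "v < n" for v
    using that by (auto simp: complete_graph_def)
  then have "degree n (complete_graph n) v = n - 1" if "v < n" for v
    unfolding degree_def using that by simp
  moreover have "common_neighbours n (complete_graph n) u v = n - 2" if "u < n" "v < n" "u \<noteq> v" for u v
  proof -
    have "{w. w < n \<and> complete_graph n u w \<and> complete_graph n v w} = {..<n} - {u, v}"
      using that by (auto simp: complete_graph_def)
    moreover have "card ({..<n} - {u, v}) = n - 2" using that by (subst card_Diff_subset) auto
    ultimately show ?thesis unfolding common_neighbours_def by simp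
  qed
  moreover have "real (n - 2) = real (n - 1) * (real (n - 1) - 1) / (real n - 1)"
    using assms by (simp add: of_nat_diff field_simps)
  ultimately show ?thesis unfolding is_S_def strongly_regular_def by (auto simp: complete_graph_def)
qed

lemma is_S_matching_graph:
  assumes "even n"
  shows "is_S n (matching_graph n) 1"
proof -
  have "degree n (matching_graph n) v = 1" if "v < n" for v
  proof -
    define p where "p = (if even v then v + 1 else v - 1)"
    have "p < n" using that assms unfolding p_def by (auto elim!: evenE oddE)
    then have "{u. u < n \<and> matching_graph n v u} = {p}"
      using that unfolding p_def matching_graph_def by (auto elim!: evenE oddE)
    then show ?thesis unfolding degree_def by simp
  qed
  moreover have "common_neighbours n (matching_graph n) u v = 0" if "u \<noteq> v" for u v
    using that unfolding common_neighbours_def matching_graph_def by auto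
  ultimately show ?thesis unfolding is_S_def strongly_regular_def by auto
qed

lemma special_graph_iff_is_S:
  assumes "n \<ge> 2"
  shows "(graph_iso n E (complete_graph n) \<or> (even n \<and> graph_iso n E (matching_graph n)) \<or>
          (\<exists>r. is_S n E r)) \<longleftrightarrow> (\<exists>r. is_S n E r)"
  using is_S_graph_iso is_S_complete_graph[OF assms] is_S_matching_graph by blast

lemma two_le_vertices:
  assumes G: "simple_graph n E" and m: "num_edges n E \<ge> 1"
  shows "n \<ge> 2"
proof -
  have "edges n E \<noteq> {}" using m unfolding num_edges_def by (metis card.empty not_one_le_zero)
  then obtain i j where "i < n" "j < n" "E i j" unfolding edges_def by auto
  then show ?thesis using simple_graphD(3)[OF G] by fastforce
qed

section \<open>The bounds on QE\<close>

lemma QE_le_bound: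
  assumes G: "simple_graph n E" and m: "num_edges n E \<ge> 1"
  defines "d \<equiv> 2 * real (num_edges n E) / real n"
    and "X \<equiv> 2 * real (num_edges n E) + real (zagreb1 n E) - 4 * real (num_edges n E)^2 / real n"
  assumes dense: "X \<le> real n * d^2"
  shows "QE n E \<le> d + sqrt ((real n - 1) * (X - d^2))"
    and "QE n E = d + sqrt ((real n - 1) * (X - d^2)) \<longleftrightarrow> (\<exists>r. is_S n E r)"
proof -
  have n: "n \<ge> 2" using two_le_vertices[OF G m] .
  obtain U \<mu> where spectrum: "signless_spectrum n E U \<mu>" and QE: "QE n E = (\<Sum>i<n. \<bar>\<mu> i - d\<bar>)"
    using signless_laplacian_spectral_decomposition[OF G] unfolding d_def by blast
  interpret signless_spectrum n E U \<mu> by (rule spectrum)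
  obtain i0 where i0: "i0 < n" and top: "4 * real (num_edges n E) / real n \<le> \<mu> i0"
    and regular: "\<mu> i0 = 4 * real (num_edges n E) / real n \<Longrightarrow> \<forall>j<n. real (degree n E j) = d"
    using largest_eigenvalue_bound n unfolding d_def by (metis not_numeral_le_zero not_gr_zero)
  have d: "0 < d" "d \<le> \<mu> i0 - d" using m n top unfolding d_def by (auto simp: field_simps)
  have sum_sq: "(\<Sum>i<n. (\<mu> i - d)^2) = X"
    using centred_sum_squares n unfolding d_def X_def by simp
  note bound = sum_abs_peak_bound[of n i0 d "\<lambda>i. \<mu> i - d", OF n i0 d, unfolded sum_sq, OF dense]
  show "QE n E \<le> d + sqrt ((real n - 1) * (X - d^2))" using bound(1) unfolding QE .
  show "QE n E = d + sqrt ((real n - 1) * (X - d^2)) \<longleftrightarrow> (\<exists>r. is_S n E r)"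
  proof
    assume "QE n E = d + sqrt ((real n - 1) * (X - d^2))"
    then have "(\<Sum>i<n. \<bar>\<mu> i - d\<bar>) = d + sqrt ((real n - 1) * (X - d^2))" unfolding QE .
    note peak_others = bound(2)[OF this]
    have peak: "\<mu> i0 - d = d" using peak_others by (rule conjunct1)
    have others: "\<forall>i<n. \<forall>j<n. i \<noteq> i0 \<longrightarrow> j \<noteq> i0 \<longrightarrow> \<bar>\<mu> i - d\<bar> = \<bar>\<mu> j - d\<bar>"
      using peak_others by (rule conjunct2)
    have "\<mu> i0 = 4 * real (num_edges n E) / real n" using peak unfolding d_def by simp
    then have deg: "\<forall>j<n. real (degree n E j) = d" by (rule regular)
    define r where "r = degree n E 0"
    have r: "real r = d" using deg n unfolding r_def by simp
    have regular: "\<forall>j<n. degree n E j = r" using deg r by (metis of_nat_eq_iff)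
    define j1 where "j1 = (if i0 = 0 then 1 else (0::nat))"
    have j1: "j1 < n" "j1 \<noteq> i0" unfolding j1_def using n by auto
    have "\<forall>i<n. i \<noteq> i0 \<longrightarrow> \<bar>\<mu> i - real r\<bar> = \<bar>\<mu> j1 - d\<bar>"
      using others[rule_format, OF _ j1(1) _ j1(2)] unfolding r by blast
    moreover have "\<mu> i0 = 2 * real r" using peak r by simp
    ultimately show "\<exists>r. is_S n E r" using regular_imp_strongly_regular[OF n regular i0] by blast
  next
    assume "\<exists>r. is_S n E r"
    then show "QE n E = d + sqrt ((real n - 1) * (X - d^2))"
      using strongly_regular_deviation[OF n] unfolding QE d_def X_def by blast
  qed
qed

lemma QE_lt_bound:
  assumes G: "simple_graph n E" and m: "num_edges n E \<ge> 1"
  defines "d \<equiv> 2 * real (num_edges n E) / real n"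
    and "X \<equiv> 2 * real (num_edges n E) + real (zagreb1 n E) - 4 * real (num_edges n E)^2 / real n"
  assumes sparse: "real n * d^2 < X"
  shows "QE n E < sqrt (X / real n) + sqrt ((real n - 1) * (X - X / real n))"
proof -
  have n: "n > 0" using two_le_vertices[OF G m] by simp
  obtain U \<mu> where spectrum: "signless_spectrum n E U \<mu>" and QE: "QE n E = (\<Sum>i<n. \<bar>\<mu> i - d\<bar>)"
    using signless_laplacian_spectral_decomposition[OF G] unfolding d_def by blast
  interpret signless_spectrum n E U \<mu> by (rule spectrum)
  have "d > 0" using m n unfolding d_def by simp
  moreover have "(\<Sum>i<n. \<mu> i - d) = 0" using centred_sum[OF n] unfolding d_def .
  moreover have "\<forall>i<n. - d \<le> \<mu> i - d" using eigenvalue_nonneg by simp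
  moreover have "(\<Sum>i<n. (\<mu> i - d)^2) = X"
    using centred_sum_squares[OF n] unfolding d_def X_def .
  ultimately have "QE n E < sqrt (real n * X)"
    using sum_abs_lt_sqrt[OF n, of d "\<lambda>i. \<mu> i - d"] sparse unfolding QE by simp
  then show ?thesis unfolding sqrt_mean_plus_sqrt_rest[OF n] .
qed

lemma vertices_le_ratio_iff:
  fixes n :: nat and m M1 :: real
  assumes "n > 0" "m \<ge> 1" "M1 \<ge> 0"
  shows "real n \<le> 8 * m^2 / (2 * m + M1) \<longleftrightarrow> 2 * m + M1 - 4 * m^2 / real n \<le> real n * (2 * m / real n)^2"
proof -
  have "real n \<le> 8 * m^2 / (2 * m + M1) \<longleftrightarrow> real n * (2 * m + M1) \<le> 8 * m^2"
    using assms by (simp add: le_divide_eq)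
  also have "\<dots> \<longleftrightarrow> 2 * m + M1 \<le> 8 * m^2 / real n"
    using assms by (simp add: le_divide_eq mult.commute)
  also have "\<dots> \<longleftrightarrow> 2 * m + M1 - 4 * m^2 / real n \<le> real n * (2 * m / real n)^2"
  proof -
    have "real n * (2 * m / real n)^2 = 4 * m^2 / real n"
      using assms by (simp add: power2_eq_square field_simps)
    moreover have "8 * m^2 / real n = 2 * (4 * m^2 / real n)" by simp
    ultimately show ?thesis by linarith
  qed
  finally show ?thesis .
qed

theorem mainTheorem13:
  fixes n :: nat and E :: "nat \<Rightarrow> nat \<Rightarrow> bool"
  assumes G: "simple_graph n E"
    and m1: "num_edges n E \<ge> 1"
  defines "m \<equiv> real (num_edges n E)"
    and "M1 \<equiv> real (zagreb1 n E)"
    and "X \<equiv> 2 * real (num_edges n E) + real (zagreb1 n E)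
               - 4 * real (num_edges n E)^2 / real n"
  shows "(real n \<le> 8 * m^2 / (2 * m + M1) \<longrightarrow>
            QE n E \<le> 2 * m / real n + sqrt ((real n - 1) * (X - (2 * m / real n)^2)) \<and>
            (QE n E = 2 * m / real n + sqrt ((real n - 1) * (X - (2 * m / real n)^2)) \<longleftrightarrow>
               graph_iso n E (complete_graph n) \<or>
               (even n \<and> graph_iso n E (matching_graph n)) \<or>
               (\<exists>r. is_S n E r)))
       \<and> (real n > 8 * m^2 / (2 * m + M1) \<longrightarrow>
            QE n E < sqrt (X / real n) + sqrt ((real n - 1) * (X - X / real n)))"
proof -
  have n: "n \<ge> 2" using two_le_vertices[OF G m1] .
  have dense: "real n \<le> 8 * m^2 / (2 * m + M1) \<longleftrightarrow> X \<le> real n * (2 * m / real n)^2"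
    unfolding X_def m_def M1_def using n m1 by (intro vertices_le_ratio_iff) auto
  note le_bound = QE_le_bound[OF G m1, folded X_def, folded m_def]
  note lt_bound = QE_lt_bound[OF G m1, folded X_def, folded m_def]
  show ?thesis
  proof (intro conjI impI)
    assume "real n \<le> 8 * m^2 / (2 * m + M1)"
    then have "X \<le> real n * (2 * m / real n)^2" using dense by blast
    then show "QE n E \<le> 2 * m / real n + sqrt ((real n - 1) * (X - (2 * m / real n)^2))"
      and "QE n E = 2 * m / real n + sqrt ((real n - 1) * (X - (2 * m / real n)^2)) \<longleftrightarrow>
            graph_iso n E (complete_graph n) \<or> (even n \<and> graph_iso n E (matching_graph n)) \<or>
            (\<exists>r. is_S n E r)"
      using le_bound special_graph_iff_is_S[OF n] by simp_all
  next
    assume "real n > 8 * m^2 / (2 * m + M1)"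
    then have "real n * (2 * m / real n)^2 < X" using dense by simp
    then show "QE n E < sqrt (X / real n) + sqrt ((real n - 1) * (X - X / real n))" by (rule lt_bound)
  qed
qed

end
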